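(* Let $\varepsilon\ge0$ and $\delta_0\in\mathbb R$ be such that \[ \inf_{[-\ell,\ell]}h_{\rm eq}-\varepsilon|\delta_0|>0\qquad\text{and}\qquad \varepsilon|\delta_0|<\tau_0(\varepsilon|\delta_0|)\,\frac{2r_0}{\ell}. \] Then there exists a unique global solution $\delta\in C^\infty(\mathbb R^+)$ of \[ \tau_0(\varepsilon\delta)^2\ddot\delta+\ell\dot\delta+\delta+\varepsilon\big(\tau_0(\varepsilon\delta)\tau_0'(\varepsilon\delta)+\gamma(\varepsilon\dot\delta)\big)\dot\delta^2=0 \] with initial condition $(\delta,\dot\delta)_{|t=0}=(\delta_0,0)$.
   Context: $\ell>0$, $\tau_{\rm buoy}>0$, $h_{\rm eq}$ a positive continuous even function on $[-\ell,\ell]$. For real $r$ with $h_{\rm eq}+r>0$, $\tau_0(r)=\big(\tau_{\rm buoy}^2+\frac1{2\ell}\int_{-\ell}^\ell\frac{x^2}{h_{\rm eq}(x)+r}dx\big)^{1/2}$ and $\tau_0'$ its derivative. $r_0=\frac4{27}$. For $r<r_0$, $\sigma_0(r)$ is the largest real root of $\sigma^3-\sigma^2+r=0$ (the real branch with $\sigma_0(0)=1$; the paper writes it by Cardano's formula $\sigma_0(r)=\frac13(1+C_-(r)+C_+(r))$, $C_\pm(r)=\frac32(-4r+2r_0\pm4\sqrt{r(r-r_0)})^{1/3}$). The function $\gamma$ is defined for $\ell y<2r_0$ by $y^2\gamma(y)=-(\sigma_0(\frac{\ell y}{2})-1)(3\sigma_0(\frac{\ell y}{2})-1)-\ell y$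 for $y\ne0$, and $\gamma(0)=\ell^2/4$; it is smooth. *)

theory Defs
  imports "HOL-Analysis.Analysis"
begin

definition r0 :: real where "r0 = 4/27"

definition tau0 :: "real \<Rightarrow> real \<Rightarrow> (real \<Rightarrow> real) \<Rightarrow> real \<Rightarrow> real" where
  "tau0 l tb h r = sqrt (tb\<^sup>2 + 1 / (2 * l) * integral {-l..l} (\<lambda>x. x\<^sup>2 / (h x + r)))"

definition tau0' :: "real \<Rightarrow> real \<Rightarrow> (real \<Rightarrow> real) \<Rightarrow> real \<Rightarrow> real" where
  "tau0' l tb h r = deriv (tau0 l tb h) r"

definition sigma0 :: "real \<Rightarrow> real" where
  "sigma0 r = (GREATEST s. s ^ 3 - s\<^sup>2 + r = 0)"

definition gamma :: "real \<Rightarrow> real \<Rightarrow> real" where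
  "gamma l y = (if y = 0 then l\<^sup>2 / 4
     else (- (sigma0 (l * y / 2) - 1) * (3 * sigma0 (l * y / 2) - 1) - l * y) / y\<^sup>2)"

text \<open>D is a tower of (one-sided at 0) derivatives of D 0 on [0,\<infinity>): C^\<infinity> on R^+.\<close>
definition deriv_tower_nonneg :: "(nat \<Rightarrow> real \<Rightarrow> real) \<Rightarrow> bool" where
  "deriv_tower_nonneg D \<longleftrightarrow>
     (\<forall>n. \<forall>t\<ge>0. (D n has_real_derivative D (Suc n) t) (at t within {0..}))"

text \<open>delta is a global C^\<infinity> solution on [0,\<infinity>) of the ODE with initial data (delta0, 0),
  where all terms of the ODE are defined along the solution.\<close>
definition is_global_solution ::
  "real \<Rightarrow> real \<Rightarrow> (real \<Rightarrow> real) \<Rightarrow> real \<Rightarrow> real \<Rightarrow> (real \<Rightarrow> real) \<Rightarrow> bool" where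
  "is_global_solution l tb h eps d0 \<delta> \<longleftrightarrow>
     (\<exists>D. D 0 = \<delta> \<and> deriv_tower_nonneg D \<and> D 0 0 = d0 \<and> D 1 0 = 0 \<and>
       (\<forall>t\<ge>0. (\<forall>x\<in>{-l..l}. h x + eps * D 0 t > 0) \<and> l * (eps * D 1 t) < 2 * r0 \<and>
          (tau0 l tb h (eps * D 0 t))\<^sup>2 * D 2 t + l * D 1 t + D 0 t
          + eps * (tau0 l tb h (eps * D 0 t) * tau0' l tb h (eps * D 0 t)
                   + gamma l (eps * D 1 t)) * (D 1 t)\<^sup>2 = 0))"

end

(*
  Written as a first-order system for (delta, delta'), the equation reads
  delta'' = accel delta delta', where accel is smooth as long as eps delta is an admissible shift
  of h (so that tau0 is defined) and l eps delta' < 2 r0 (the domain of gamma).  Clamping both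
  variables to a box [-A, A] x [-B, B] inside this region gives a bounded, globally Lipschitz
  field, whose initial value problem has a unique global solution by Banach's fixed point theorem
  for the Picard operator with an exponential weight.

  The energy tau0(eps delta)^2 delta'^2 / 2 + delta^2 / 2 has derivative
  - delta'^2 (l + eps delta' gamma(eps delta')) <= 0, so along solutions |delta| <= |delta0| and,
  since tau0 is nonincreasing, |delta'| <= |delta0| / tau0(eps |delta0|).  The two hypotheses on
  delta0 leave room for a box as above strictly containing these bounds.  Hence the truncated
  solution never reaches the boundary of the box and solves the original equation (smoothness
  follows by bootstrapping), while any solution of the original equation stays in the box, solves
  the truncated system, and therefore coincides with it.
*)

theory Submission
  imports Defs
begin

section \<open>Initial value problems with a bounded globally Lipschitz field\<close>

lemma has_vector_derivative_integral_Ici: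
  fixes g :: "real \<Rightarrow> 'a::banach"
  assumes "continuous_on {0..} g" "t \<ge> 0"
  shows "((\<lambda>u. integral {0..u} g) has_vector_derivative g t) (at t within {0..})"
proof -
  have "continuous_on {0..t+1} g" using assms(1) by (rule continuous_on_subset) auto
  then have "((\<lambda>u. integral {0..u} g) has_vector_derivative g t) (at t within {0..t+1})"
    using integral_has_vector_derivative[of 0 "t+1" g t] assms(2) by simp
  moreover have "at t within {0..t+1} = at t within {0..}"
    by (rule at_within_nhd[where S="{..<t+1}"]) (use assms(2) in auto)
  ultimately show ?thesis by simp
qed

lemma mult_exp_neg_le:
  fixes k t :: real
  assumes "k > 0" "t \<ge> 0"
  shows "t * exp (- k * t) \<le> 1 / k"
proof -
  have "k * t \<le> exp (k * t)" using exp_ge_add_one_self[of "k * t"] by linarith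
  then have "t \<le> exp (k * t) / k" using assms by (simp add: field_simps)
  then have "t * exp (- k * t) \<le> exp (k * t) / k * exp (- k * t)"
    by (rule mult_right_mono) auto
  also have "\<dots> = 1 / k" by (simp add: exp_minus field_simps)
  finally show ?thesis .
qed

lemma integral_exp_linear:
  fixes k t :: real
  assumes "k > 0" "t \<ge> 0"
  shows "integral {0..t} (\<lambda>s. exp (k * s)) = (exp (k * t) - 1) / k"
proof -
  have "((\<lambda>s. exp (k * s)) has_integral (exp (k * t) / k - exp (k * 0) / k)) {0..t}"
    by (rule fundamental_theorem_of_calculus[OF assms(2)])
       (use assms(1) in \<open>auto intro!: derivative_eq_intros
          simp: has_real_derivative_iff_has_vector_derivative[symmetric]\<close>)
  then show ?thesis using assms by (simp add: integral_unique diff_divide_distrib)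
qed

definition ivp_solution :: "('a::real_normed_vector \<Rightarrow> 'a) \<Rightarrow> 'a \<Rightarrow> (real \<Rightarrow> 'a) \<Rightarrow> bool" where
  "ivp_solution \<Phi> u0 u \<longleftrightarrow> u 0 = u0 \<and> (\<forall>t\<ge>0. (u has_vector_derivative \<Phi> (u t)) (at t within {0..}))"

lemma ivp_solution_continuous_on:
  "ivp_solution \<Phi> u0 u \<Longrightarrow> continuous_on {0..} u"
  unfolding ivp_solution_def continuous_on_eq_continuous_within
  by (auto intro: has_vector_derivative_continuous)

lemma ivp_solution_integral_eq:
  fixes \<Phi> :: "'a::banach \<Rightarrow> 'a"
  assumes "ivp_solution \<Phi> u0 u" "t \<ge> 0"
  shows "u t = u0 + integral {0..t} (\<lambda>s. \<Phi> (u s))"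
proof -
  have "((\<lambda>s. \<Phi> (u s)) has_integral (u t - u 0)) {0..t}"
    by (rule fundamental_theorem_of_calculus[OF assms(2)])
       (use assms(1) in \<open>auto simp: ivp_solution_def intro: has_vector_derivative_within_subset\<close>)
  then show ?thesis using assms(1) by (simp add: integral_unique ivp_solution_def)
qed

text \<open>Picard's operator conjugated by the weight \<open>exp (- k t)\<close> and extended constantly to
  \<open>t < 0\<close>; for \<open>k \<ge> 2 L\<close> it halves distances in the sup norm, so it has a unique bounded
  continuous fixed point.\<close>
definition weighted_picard :: "real \<Rightarrow> ('a::banach \<Rightarrow> 'a) \<Rightarrow> 'a \<Rightarrow> (real \<Rightarrow> 'a) \<Rightarrow> real \<Rightarrow> 'a" where
  "weighted_picard k \<Phi> u0 w t =
     exp (- k * max t 0) *\<^sub>R (u0 + integral {0..max t 0} (\<lambda>s. \<Phi> (exp (k * s) *\<^sub>R w s)))"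

lemma weighted_picard_bcontfun:
  fixes \<Phi> :: "'a::banach \<Rightarrow> 'a"
  assumes k: "k > 0" and cont: "continuous_on UNIV \<Phi>" and M: "\<And>p. norm (\<Phi> p) \<le> M"
    and w: "continuous_on UNIV w"
  shows "weighted_picard k \<Phi> u0 w \<in> bcontfun"
proof -
  define g where "g s = \<Phi> (exp (k * s) *\<^sub>R w s)" for s
  have cg: "continuous_on UNIV g"
    unfolding g_def by (rule continuous_on_compose2[OF cont]) (auto intro!: continuous_intros w)
  have "continuous_on {0..} (\<lambda>u. integral {0..u} g)"
    using has_vector_derivative_integral_Ici[OF continuous_on_subset[OF cg]]
    by (auto simp: continuous_on_eq_continuous_within intro: has_vector_derivative_continuous)
  then have "continuous_on UNIV (\<lambda>t. integral {0..max t 0} g)"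
    by (rule continuous_on_compose2) (auto intro!: continuous_intros)
  then have "continuous_on UNIV (weighted_picard k \<Phi> u0 w)"
    unfolding weighted_picard_def g_def[symmetric] by (intro continuous_intros)
  moreover have "norm (weighted_picard k \<Phi> u0 w t) \<le> norm u0 + M / k" for t
  proof -
    define \<tau> where "\<tau> = max t 0"
    have \<tau>: "\<tau> \<ge> 0" by (simp add: \<tau>_def)
    have M0: "M \<ge> 0" using M[of 0] norm_ge_zero order_trans by blast
    have "norm (weighted_picard k \<Phi> u0 w t) = exp (- k * \<tau>) * norm (u0 + integral {0..\<tau>} g)"
      by (simp add: weighted_picard_def g_def[abs_def] \<tau>_def)
    also have "\<dots> \<le> exp (- k * \<tau>) * (norm u0 + M * \<tau>)"
      using integral_bound[of 0 \<tau> g M] \<tau> continuous_on_subset[OF cg]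
      by (intro mult_left_mono order_trans[OF norm_triangle_ineq]) (auto simp: g_def M)
    also have "\<dots> = exp (- k * \<tau>) * norm u0 + M * (\<tau> * exp (- k * \<tau>))"
      by (simp add: algebra_simps)
    also have "\<dots> \<le> norm u0 + M * (1 / k)"
      using k \<tau> M0 mult_exp_neg_le[OF k \<tau>]
      by (intro add_mono mult_left_mono mult_left_le_one_le) auto
    finally show ?thesis by simp
  qed
  then have "bounded (range (weighted_picard k \<Phi> u0 w))"
    unfolding bounded_iff by blast
  ultimately show ?thesis by (simp add: bcontfun_def)
qed

lemma norm_diff_weighted_integrals_le:
  fixes \<Phi> :: "'a::banach \<Rightarrow> 'a"
  assumes k: "k > 0" and lip: "L-lipschitz_on UNIV \<Phi>" and \<tau>: "\<tau> \<ge> 0"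
    and w1: "continuous_on UNIV w1" and w2: "continuous_on UNIV w2"
    and d: "\<And>s. norm (w1 s - w2 s) \<le> d"
  shows "norm (integral {0..\<tau>} (\<lambda>s. \<Phi> (exp (k * s) *\<^sub>R w1 s))
      - integral {0..\<tau>} (\<lambda>s. \<Phi> (exp (k * s) *\<^sub>R w2 s))) \<le> L * d * ((exp (k * \<tau>) - 1) / k)"
proof -
  define g1 where "g1 s = \<Phi> (exp (k * s) *\<^sub>R w1 s)" for s
  define g2 where "g2 s = \<Phi> (exp (k * s) *\<^sub>R w2 s)" for s
  have L: "L \<ge> 0" by (rule lipschitz_on_nonneg[OF lip])
  have cont: "continuous_on UNIV \<Phi>" by (rule lipschitz_on_continuous_on[OF lip])
  have i1: "g1 integrable_on {0..\<tau>}" and i2: "g2 integrable_on {0..\<tau>}"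
    unfolding g1_def g2_def
    by (auto intro!: integrable_continuous_interval continuous_on_compose2[OF cont]
        continuous_intros continuous_on_subset[OF w1] continuous_on_subset[OF w2])
  have "norm (g1 s - g2 s) \<le> L * d * exp (k * s)" for s
  proof -
    have "norm (g1 s - g2 s) \<le> L * norm (exp (k * s) *\<^sub>R w1 s - exp (k * s) *\<^sub>R w2 s)"
      unfolding g1_def g2_def using lipschitz_onD[OF lip] by (simp add: dist_norm)
    also have "\<dots> = L * (exp (k * s) * norm (w1 s - w2 s))"
      by (simp add: scaleR_diff_right[symmetric])
    also have "\<dots> \<le> L * (exp (k * s) * d)"
      using L d by (intro mult_left_mono) auto
    finally show ?thesis by (simp add: algebra_simps)
  qed
  then have "norm (integral {0..\<tau>} (\<lambda>s. g1 s - g2 s)) \<le> integral {0..\<tau>} (\<lambda>s. L * d * exp (k * s))"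
    by (intro integral_norm_bound_integral integrable_diff i1 i2 integrable_continuous_interval
        continuous_intros)
  also have "\<dots> = L * d * ((exp (k * \<tau>) - 1) / k)"
    using integral_exp_linear[OF k \<tau>] by simp
  finally show ?thesis
    using integral_diff[OF i1 i2] by (simp add: g1_def[abs_def] g2_def[abs_def])
qed

lemma weighted_picard_contraction:
  fixes \<Phi> :: "'a::banach \<Rightarrow> 'a"
  assumes k: "k > 0" "2 * L \<le> k" and lip: "L-lipschitz_on UNIV \<Phi>"
    and w1: "continuous_on UNIV w1" and w2: "continuous_on UNIV w2"
    and d: "\<And>s. norm (w1 s - w2 s) \<le> d"
  shows "norm (weighted_picard k \<Phi> u0 w1 t - weighted_picard k \<Phi> u0 w2 t) \<le> d / 2"
proof -
  have L: "L \<ge> 0" by (rule lipschitz_on_nonneg[OF lip])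
  have d0: "d \<ge> 0" using d[of 0] norm_ge_zero order_trans by blast
  define \<tau> where "\<tau> = max t 0"
  have \<tau>: "\<tau> \<ge> 0" by (simp add: \<tau>_def)
  have "norm (weighted_picard k \<Phi> u0 w1 t - weighted_picard k \<Phi> u0 w2 t)
      = exp (- k * \<tau>) * norm (integral {0..\<tau>} (\<lambda>s. \<Phi> (exp (k * s) *\<^sub>R w1 s))
          - integral {0..\<tau>} (\<lambda>s. \<Phi> (exp (k * s) *\<^sub>R w2 s)))"
    by (simp add: weighted_picard_def \<tau>_def flip: scaleR_diff_right)
  also have "\<dots> \<le> exp (- k * \<tau>) * (L * d * ((exp (k * \<tau>) - 1) / k))"
    by (intro mult_left_mono norm_diff_weighted_integrals_le[OF k(1) lip \<tau> w1 w2 d]) auto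
  also have "\<dots> = L * d * (1 - exp (- k * \<tau>)) / k"
    by (simp add: field_simps exp_minus)
  also have "\<dots> \<le> L * d / k"
    using k L d0 by (intro divide_right_mono) (auto simp: mult_left_le)
  also have "\<dots> \<le> d / 2"
    using mult_right_mono[OF k(2) d0] k(1) by (simp add: field_simps)
  finally show ?thesis .
qed

lemma weighted_picard_fixpoint_ivp_solution:
  fixes \<Phi> :: "'a::banach \<Rightarrow> 'a"
  assumes cont: "continuous_on UNIV \<Phi>" and w: "continuous_on UNIV w"
    and fixpoint: "weighted_picard k \<Phi> u0 w = w"
  shows "ivp_solution \<Phi> u0 (\<lambda>t. exp (k * t) *\<^sub>R w t)"
proof -
  define u where "u t = exp (k * t) *\<^sub>R w t" for t
  have cu: "continuous_on {0..} (\<lambda>s. \<Phi> (u s))"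
    unfolding u_def by (intro continuous_on_compose2[OF cont] continuous_intros
        continuous_on_subset[OF w]) auto
  have u_eq: "u t = u0 + integral {0..t} (\<lambda>s. \<Phi> (u s))" if "t \<ge> 0" for t
  proof -
    have "u t = exp (k * t) *\<^sub>R weighted_picard k \<Phi> u0 w t" by (simp add: u_def fixpoint)
    also have "\<dots> = u0 + integral {0..t} (\<lambda>s. \<Phi> (u s))"
      using that by (simp add: weighted_picard_def u_def exp_minus)
    finally show ?thesis .
  qed
  have "(u has_vector_derivative \<Phi> (u t)) (at t within {0..})" if t: "t \<ge> 0" for t
  proof (rule has_vector_derivative_transform[rotated 2])
    show "((\<lambda>t. u0 + integral {0..t} (\<lambda>s. \<Phi> (u s))) has_vector_derivative \<Phi> (u t)) (at t within {0..})"
      using has_vector_derivative_integral_Ici[OF cu t] by (auto intro!: derivative_eq_intros)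
  qed (use t u_eq in auto)
  moreover have "u 0 = u0" using u_eq[of 0] by simp
  ultimately show ?thesis by (simp add: ivp_solution_def u_def[abs_def])
qed

lemma ivp_solution_weighted_picard_fixpoint:
  fixes \<Phi> :: "'a::banach \<Rightarrow> 'a" and k :: real
  assumes "ivp_solution \<Phi> u0 v"
  defines "w \<equiv> \<lambda>t. exp (- k * max t 0) *\<^sub>R v (max t 0)"
  shows "continuous_on UNIV w" and "weighted_picard k \<Phi> u0 w = w"
proof -
  show "continuous_on UNIV w"
    unfolding w_def
    by (intro continuous_intros continuous_on_compose2[OF ivp_solution_continuous_on[OF assms(1)]])
       auto
  have "weighted_picard k \<Phi> u0 w t = w t" for t
  proof -
    define \<tau> where "\<tau> = max t 0"
    have \<tau>: "\<tau> \<ge> 0" by (simp add: \<tau>_def)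
    have "integral {0..\<tau>} (\<lambda>s. \<Phi> (exp (k * s) *\<^sub>R w s)) = integral {0..\<tau>} (\<lambda>s. \<Phi> (v s))"
      by (rule integral_cong) (auto simp: w_def exp_minus)
    then show ?thesis
      using ivp_solution_integral_eq[OF assms(1) \<tau>] by (simp add: weighted_picard_def w_def \<tau>_def)
  qed
  then show "weighted_picard k \<Phi> u0 w = w" ..
qed

theorem ivp_solution_exists_unique:
  fixes \<Phi> :: "'a::banach \<Rightarrow> 'a"
  assumes lip: "L-lipschitz_on UNIV \<Phi>" and bnd: "bounded (range \<Phi>)"
  shows "\<exists>u. ivp_solution \<Phi> u0 u \<and> (\<forall>v. ivp_solution \<Phi> u0 v \<longrightarrow> (\<forall>t\<ge>0. v t = u t))"
proof -
  define k where "k = 2 * L + 1"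
  have k: "k > 0" "2 * L \<le> k" using lipschitz_on_nonneg[OF lip] by (auto simp: k_def)
  have cont: "continuous_on UNIV \<Phi>" by (rule lipschitz_on_continuous_on[OF lip])
  obtain M where M: "\<And>p. norm (\<Phi> p) \<le> M" using bnd unfolding bounded_iff by blast
  define G :: "(real \<Rightarrow>\<^sub>C 'a) \<Rightarrow> (real \<Rightarrow>\<^sub>C 'a)" where
    "G w = Bcontfun (weighted_picard k \<Phi> u0 (apply_bcontfun w))" for w
  have G_apply: "apply_bcontfun (G w) = weighted_picard k \<Phi> u0 (apply_bcontfun w)" for w
    unfolding G_def by (rule Bcontfun_inverse[OF weighted_picard_bcontfun[OF k(1) cont M]]) simp
  have contraction: "\<forall>w1 w2. dist (G w1) (G w2) \<le> 1/2 * dist w1 w2"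
  proof (intro allI)
    fix w1 w2
    show "dist (G w1) (G w2) \<le> 1/2 * dist w1 w2"
    proof (rule dist_bound)
      fix t
      have "norm (apply_bcontfun w1 s - apply_bcontfun w2 s) \<le> dist w1 w2" for s
        using dist_bounded[of w1 s w2] by (simp add: dist_norm)
      from weighted_picard_contraction[OF k lip _ _ this]
      show "dist (apply_bcontfun (G w1) t) (apply_bcontfun (G w2) t) \<le> 1/2 * dist w1 w2"
        by (simp add: G_apply dist_norm)
    qed
  qed
  have "\<exists>!w. G w = w" by (rule banach_fix_type[OF _ _ contraction]) auto
  then obtain w where w: "G w = w" and w_unique: "\<And>w'. G w' = w' \<Longrightarrow> w' = w"
    by metis
  define u where "u t = exp (k * t) *\<^sub>R apply_bcontfun w t" for t
  have "ivp_solution \<Phi> u0 u"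
    unfolding u_def by (rule weighted_picard_fixpoint_ivp_solution[OF cont]) (simp_all add: w flip: G_apply)
  moreover have "v t = u t" if v: "ivp_solution \<Phi> u0 v" and t: "t \<ge> 0" for v t
  proof -
    define wv where "wv t = exp (- k * max t 0) *\<^sub>R v (max t 0)" for t
    note wv = ivp_solution_weighted_picard_fixpoint[OF v, where k=k, folded wv_def]
    have wv_bcontfun: "wv \<in> bcontfun"
      using weighted_picard_bcontfun[OF k(1) cont M wv(1), of u0] wv(2) by simp
    then have "G (Bcontfun wv) = Bcontfun wv"
      unfolding G_def using wv(2) by (simp add: Bcontfun_inverse)
    then have "wv t = apply_bcontfun w t"
      using w_unique Bcontfun_inverse[OF wv_bcontfun] by metis
    then have "v t /\<^sub>R exp (k * t) = apply_bcontfun w t" using t by (simp add: wv_def exp_minus)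
    then have "exp (k * t) *\<^sub>R (v t /\<^sub>R exp (k * t)) = u t" by (simp add: u_def)
    then show ?thesis by simp
  qed
  ultimately show ?thesis by blast
qed

section \<open>Smooth functions on subsets of the real line\<close>

definition dense_in_itself :: "real set \<Rightarrow> bool" where
  "dense_in_itself S \<longleftrightarrow> (\<forall>x\<in>S. x islimpt S)"

definition deriv_on :: "real set \<Rightarrow> (real \<Rightarrow> real) \<Rightarrow> real \<Rightarrow> real" where
  "deriv_on S f x = vector_derivative f (at x within S)"

fun Ck_on :: "nat \<Rightarrow> real set \<Rightarrow> (real \<Rightarrow> real) \<Rightarrow> bool" where
  "Ck_on 0 S f \<longleftrightarrow> continuous_on S f"
| "Ck_on (Suc k) S f \<longleftrightarrow>
     (\<forall>x\<in>S. (f has_real_derivative deriv_on S f x) (at x within S)) \<and> Ck_on k S (deriv_on S f)"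

definition smooth_on :: "real set \<Rightarrow> (real \<Rightarrow> real) \<Rightarrow> bool" where
  "smooth_on S f \<longleftrightarrow> (\<forall>k. Ck_on k S f)"

lemma smooth_on_deriv_on: "smooth_on S f \<Longrightarrow> smooth_on S (deriv_on S f)"
  unfolding smooth_on_def by (metis Ck_on.simps(2))

lemma smooth_on_has_derivative:
  assumes "smooth_on S f" "x \<in> S"
  shows "(f has_real_derivative deriv_on S f x) (at x within S)"
proof -
  have "Ck_on (Suc 0) S f" using assms(1) by (simp add: smooth_on_def)
  with assms(2) show ?thesis by simp
qed

lemma smooth_on_imp_continuous_on: "smooth_on S f \<Longrightarrow> continuous_on S f"
  unfolding smooth_on_def by (metis Ck_on.simps(1))

lemma dense_in_itself_open: "open S \<Longrightarrow> dense_in_itself S"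
  by (auto simp: dense_in_itself_def interior_open)

lemma dense_in_itself_nonzero: "dense_in_itself (- {0::real})"
  by (intro dense_in_itself_open open_Compl closed_singleton)

lemma dense_in_itself_Ici: "dense_in_itself {0::real..}"
  unfolding dense_in_itself_def
proof
  fix x :: real assume "x \<in> {0..}"
  then have "x islimpt {x..x+1}" by simp
  then show "x islimpt {0..}" by (rule islimpt_subset) (use \<open>x \<in> {0..}\<close> in auto)
qed

lemma deriv_on_eq:
  assumes "dense_in_itself S" "x \<in> S" "(f has_real_derivative D) (at x within S)"
  shows "deriv_on S f x = D"
  unfolding deriv_on_def
  by (rule vector_derivative_within)
     (use assms in \<open>auto simp: dense_in_itself_def trivial_limit_within
        has_real_derivative_iff_has_vector_derivative\<close>)

lemma Ck_on_imp_continuous_on: "Ck_on k S f \<Longrightarrow> continuous_on S f"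
  by (cases k) (auto intro: DERIV_continuous_on)

lemma Ck_on_SucD: "Ck_on (Suc k) S f \<Longrightarrow> Ck_on k S f"
  by (induction k arbitrary: f) (auto intro: DERIV_continuous_on)

lemma Ck_on_cong:
  assumes "Ck_on k S f" "dense_in_itself S" "\<And>x. x \<in> S \<Longrightarrow> f x = g x"
  shows "Ck_on k S g"
  using assms
proof (induction k arbitrary: f g)
  case 0
  then show ?case using continuous_on_cong by force
next
  case (Suc k)
  have g': "(g has_real_derivative deriv_on S f x) (at x within S)" if "x \<in> S" for x
    by (rule has_field_derivative_transform_within[of f _ _ _ 1]) (use Suc.prems that in auto)
  then have "deriv_on S g x = deriv_on S f x" if "x \<in> S" for x
    using deriv_on_eq[OF Suc.prems(2) that] that by blast
  with Suc g' show ?case by auto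
qed

lemma Ck_on_SucI:
  assumes "dense_in_itself S" and "\<And>x. x \<in> S \<Longrightarrow> (f has_real_derivative f' x) (at x within S)"
    and "Ck_on k S f'"
  shows "Ck_on (Suc k) S f"
proof -
  have "deriv_on S f x = f' x" if "x \<in> S" for x using deriv_on_eq assms(1,2) that by blast
  with assms show ?thesis by (auto intro: Ck_on_cong)
qed

lemma smooth_onI_deriv:
  assumes "dense_in_itself S" and "\<And>x. x \<in> S \<Longrightarrow> (f has_real_derivative f' x) (at x within S)"
    and "\<And>k. Ck_on k S f \<Longrightarrow> Ck_on k S f'"
  shows "smooth_on S f"
proof -
  have "Ck_on k S f" for k
  proof (induction k)
    case 0
    show ?case using assms(2) by (auto intro: DERIV_continuous_on)
  next
    case (Suc k)
    then show ?case using assms by (blast intro: Ck_on_SucI)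
  qed
  then show ?thesis by (simp add: smooth_on_def)
qed

lemma Ck_on_const: "dense_in_itself S \<Longrightarrow> Ck_on k S (\<lambda>x. c)"
proof (induction k arbitrary: c)
  case (Suc k)
  then show ?case by (intro Ck_on_SucI[where f'="\<lambda>x. 0"]) auto
qed simp

lemma Ck_on_id:
  assumes "dense_in_itself S"
  shows "Ck_on k S (\<lambda>x. x)"
proof (cases k)
  case (Suc j)
  have "Ck_on (Suc j) S (\<lambda>x. x)"
    by (rule Ck_on_SucI[where f'="\<lambda>x. 1"]) (use assms in \<open>auto intro: Ck_on_const\<close>)
  then show ?thesis by (simp add: Suc)
qed simp

lemma Ck_on_add:
  assumes "Ck_on k S f" "Ck_on k S g" "dense_in_itself S"
  shows "Ck_on k S (\<lambda>x. f x + g x)"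
  using assms
proof (induction k arbitrary: f g)
  case (Suc k)
  show ?case
  proof (rule Ck_on_SucI[OF Suc.prems(3)])
    show "((\<lambda>x. f x + g x) has_real_derivative deriv_on S f x + deriv_on S g x) (at x within S)"
      if "x \<in> S" for x
      using Suc.prems(1,2) that by (auto intro: DERIV_add)
    show "Ck_on k S (\<lambda>x. deriv_on S f x + deriv_on S g x)"
      using Suc by simp
  qed
qed (simp add: continuous_on_add)

lemma Ck_on_mult:
  assumes "Ck_on k S f" "Ck_on k S g" "dense_in_itself S"
  shows "Ck_on k S (\<lambda>x. f x * g x)"
  using assms
proof (induction k arbitrary: f g)
  case (Suc k)
  have f': "(f has_real_derivative deriv_on S f x) (at x within S)"
    and g': "(g has_real_derivative deriv_on S g x) (at x within S)" if "x \<in> S" for x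
    using Suc.prems(1,2) that by auto
  show ?case
  proof (rule Ck_on_SucI[OF Suc.prems(3)])
    show "((\<lambda>x. f x * g x) has_real_derivative deriv_on S f x * g x + f x * deriv_on S g x)
        (at x within S)" if "x \<in> S" for x
      using DERIV_mult[OF f'[OF that] g'[OF that]] by (simp add: algebra_simps)
    have "Ck_on k S (deriv_on S f)" "Ck_on k S (deriv_on S g)" using Suc.prems(1,2) by simp_all
    then have "Ck_on k S (\<lambda>x. deriv_on S f x * g x)" "Ck_on k S (\<lambda>x. f x * deriv_on S g x)"
      using Suc.IH[OF _ Ck_on_SucD[OF Suc.prems(2)] Suc.prems(3)]
        Suc.IH[OF Ck_on_SucD[OF Suc.prems(1)] _ Suc.prems(3)] by simp_all
    then show "Ck_on k S (\<lambda>x. deriv_on S f x * g x + f x * deriv_on S g x)"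
      by (rule Ck_on_add[OF _ _ Suc.prems(3)])
  qed
qed (simp add: continuous_on_mult)

lemma Ck_on_compose:
  assumes "smooth_on V g" "Ck_on k S f" "f ` S \<subseteq> V" "dense_in_itself S" "dense_in_itself V"
  shows "Ck_on k S (\<lambda>x. g (f x))"
  using assms
proof (induction k arbitrary: g f)
  case 0
  then show ?case
    by (auto simp: smooth_on_def intro: continuous_on_compose2[of V g] Ck_on_imp_continuous_on)
next
  case (Suc k)
  note g' = smooth_on_has_derivative[OF Suc.prems(1)]
  have "((\<lambda>x. g (f x)) has_real_derivative deriv_on S f x * deriv_on V g (f x)) (at x within S)"
    if "x \<in> S" for x
  proof -
    have "(g has_real_derivative deriv_on V g (f x)) (at (f x) within f ` S)"
      using has_field_derivative_subset[OF g'] Suc.prems(3) that by blast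
    with DERIV_image_chain[OF this] Suc.prems(2) that show ?thesis
      by (simp add: o_def mult.commute)
  qed
  moreover have "Ck_on k S (\<lambda>x. deriv_on S f x * deriv_on V g (f x))"
  proof (rule Ck_on_mult[OF _ _ Suc.prems(4)])
    show "Ck_on k S (deriv_on S f)" using Suc.prems(2) by simp
    show "Ck_on k S (\<lambda>x. deriv_on V g (f x))"
      by (rule Suc.IH[OF smooth_on_deriv_on[OF Suc.prems(1)] Ck_on_SucD[OF Suc.prems(2)]
          Suc.prems(3-5)])
  qed
  ultimately show ?case by (rule Ck_on_SucI[OF Suc.prems(4)])
qed

lemma Ck_on_deriv_on_funpow: "Ck_on (n + k) S f \<Longrightarrow> Ck_on k S ((deriv_on S ^^ n) f)"
proof (induction n arbitrary: k)
  case (Suc n)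
  have "Ck_on (n + Suc k) S f" using Suc.prems by simp
  then have "Ck_on (Suc k) S ((deriv_on S ^^ n) f)" by (rule Suc.IH)
  then show ?case by simp
qed simp

lemma smooth_on_const: "dense_in_itself S \<Longrightarrow> smooth_on S (\<lambda>x. c)"
  by (simp add: smooth_on_def Ck_on_const)

lemma smooth_on_id: "dense_in_itself S \<Longrightarrow> smooth_on S (\<lambda>x. x)"
  by (simp add: smooth_on_def Ck_on_id)

lemma smooth_on_add:
  "smooth_on S f \<Longrightarrow> smooth_on S g \<Longrightarrow> dense_in_itself S \<Longrightarrow> smooth_on S (\<lambda>x. f x + g x)"
  unfolding smooth_on_def using Ck_on_add[of _ S f g] by simp

lemma smooth_on_mult:
  "smooth_on S f \<Longrightarrow> smooth_on S g \<Longrightarrow> dense_in_itself S \<Longrightarrow> smooth_on S (\<lambda>x. f x * g x)"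
  unfolding smooth_on_def using Ck_on_mult[of _ S f g] by simp

lemma smooth_on_cmult:
  assumes "smooth_on S f" "dense_in_itself S"
  shows "smooth_on S (\<lambda>x. c * f x)"
  using smooth_on_mult[OF smooth_on_const[OF assms(2)] assms] .

lemma smooth_on_diff:
  assumes "smooth_on S f" "smooth_on S g" "dense_in_itself S"
  shows "smooth_on S (\<lambda>x. f x - g x)"
proof -
  have "smooth_on S (\<lambda>x. f x + (-1) * g x)"
    by (rule smooth_on_add[OF assms(1) smooth_on_cmult[OF assms(2,3)] assms(3)])
  then show ?thesis by simp
qed

lemma smooth_on_power:
  assumes "smooth_on S f" "dense_in_itself S"
  shows "smooth_on S (\<lambda>x. f x ^ n)"
proof (induction n)
  case 0
  show ?case using smooth_on_const[OF assms(2)] by simp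
next
  case (Suc n)
  show ?case using smooth_on_mult[OF assms(1) Suc assms(2)] by simp
qed

lemma smooth_on_compose:
  "smooth_on V g \<Longrightarrow> smooth_on S f \<Longrightarrow> f ` S \<subseteq> V \<Longrightarrow> dense_in_itself S \<Longrightarrow> dense_in_itself V
    \<Longrightarrow> smooth_on S (\<lambda>x. g (f x))"
  using Ck_on_compose[of V g _ S f] unfolding smooth_on_def by simp

lemma smooth_on_cong:
  "smooth_on S f \<Longrightarrow> dense_in_itself S \<Longrightarrow> (\<And>x. x \<in> S \<Longrightarrow> f x = g x) \<Longrightarrow> smooth_on S g"
  unfolding smooth_on_def using Ck_on_cong[of _ S f g] by simp

lemma smooth_on_inverse: "smooth_on (- {0}) inverse"
proof -
  have "(inverse has_real_derivative (-1) * (inverse x * inverse x)) (at x within - {0})"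
    if "x \<in> - {0}" for x :: real
    using DERIV_inverse[of x "- {0}"] that by (simp add: power2_eq_square)
  moreover have "Ck_on k (- {0}) (\<lambda>x. (-1) * (inverse x * inverse x))"
    if "Ck_on k (- {0}) inverse" for k
  proof -
    have "Ck_on k (- {0}) (\<lambda>x. inverse x * inverse x)"
      by (rule Ck_on_mult[OF that that dense_in_itself_nonzero])
    then show ?thesis
      using Ck_on_mult[OF Ck_on_const[OF dense_in_itself_nonzero, of k "-1"] _ dense_in_itself_nonzero]
      by simp
  qed
  ultimately show ?thesis
    by (rule smooth_onI_deriv[OF dense_in_itself_nonzero, where f'="\<lambda>x. (-1) * (inverse x * inverse x)"])
qed

lemma smooth_on_inverse_compose:
  "smooth_on S f \<Longrightarrow> dense_in_itself S \<Longrightarrow> (\<And>x. x \<in> S \<Longrightarrow> f x \<noteq> 0)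
    \<Longrightarrow> smooth_on S (\<lambda>x. inverse (f x))"
  by (rule smooth_on_compose[OF smooth_on_inverse _ _ _ dense_in_itself_nonzero]) auto

lemma smooth_on_sqrt: "smooth_on {0<..} sqrt"
proof -
  have dense: "dense_in_itself {0::real<..}" by (rule dense_in_itself_open) simp
  have "(sqrt has_real_derivative inverse (sqrt x) / 2) (at x within {0<..})" if "x \<in> {0<..}" for x
    using has_field_derivative_at_within[OF DERIV_real_sqrt[of x]] that by simp
  moreover have "Ck_on k {0<..} (\<lambda>x. inverse (sqrt x) / 2)" if "Ck_on k {0<..} sqrt" for k
  proof -
    have "Ck_on k {0<..} (\<lambda>x. inverse (sqrt x))"
      by (rule Ck_on_compose[OF smooth_on_inverse that _ dense dense_in_itself_nonzero]) auto
    then have "Ck_on k {0<..} (\<lambda>x. inverse (sqrt x) * (1/2))"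
      by (rule Ck_on_mult[OF _ Ck_on_const[OF dense] dense])
    then show ?thesis by (rule Ck_on_cong[OF _ dense]) simp
  qed
  ultimately show ?thesis by (rule smooth_onI_deriv[OF dense, where f'="\<lambda>x. inverse (sqrt x) / 2"])
qed

section \<open>The root sigma0 and the coefficient gamma\<close>

lemma cube_minus_square_strict_mono:
  fixes s1 s2 :: real
  assumes "2/3 < s1" "s1 < s2"
  shows "s1^3 - s1^2 < s2^3 - s2^2"
proof -
  have "0 < (s1 - 2/3) + (s2 - 2/3) + (s1 - 2/3)^2 + (s1 - 2/3) * (s2 - 2/3) + (s2 - 2/3)^2"
    using assms by (intro add_pos_nonneg) auto
  also have "\<dots> = s1^2 + s1 * s2 + s2^2 - s1 - s2"
    by (simp add: power2_eq_square algebra_simps)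
  finally have "0 < (s2 - s1) * (s1^2 + s1 * s2 + s2^2 - s1 - s2)"
    using assms by simp
  also have "\<dots> = (s2^3 - s2^2) - (s1^3 - s1^2)"
    by (simp add: power2_eq_square power3_eq_cube algebra_simps)
  finally show ?thesis by simp
qed

lemma sigma0_eqI:
  fixes r s :: real
  assumes "2/3 < s" "s^3 - s^2 + r = 0"
  shows "sigma0 r = s"
  unfolding sigma0_def
proof (rule Greatest_equality)
  fix y :: real assume "y^3 - y^2 + r = 0"
  then show "y \<le> s"
    using cube_minus_square_strict_mono[OF assms(1), of y] assms(2) by force
qed (fact assms(2))

lemma cubic_root_gt_two_thirds_exists:
  fixes r :: real
  assumes "r < r0"
  shows "\<exists>s>2/3. s^3 - s^2 + r = 0"
proof -
  define f where "f s = s^3 - s^2 + r" for s :: real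
  define b where "b = 2 + \<bar>r\<bar>"
  have fa: "f (2/3) < 0" using assms by (simp add: f_def r0_def power3_eq_cube power2_eq_square)
  have b: "b \<ge> 2" by (simp add: b_def)
  then have "b * 1 \<le> b * b" and "b * b * 1 \<le> b * b * (b - 1)"
    by (intro mult_left_mono; simp)+
  moreover have "f b = b * b * (b - 1) + r"
    by (simp add: f_def power2_eq_square power3_eq_cube algebra_simps)
  moreover have "b + r \<ge> 0" by (simp add: b_def)
  ultimately have fb: "f b \<ge> 0" by linarith
  have "continuous_on {2/3..b} f" unfolding f_def by (intro continuous_intros)
  then obtain x where x: "2/3 \<le> x" "x \<le> b" "f x = 0"
    using IVT'[of f "2/3" 0 b] fa fb b by auto
  moreover have "x \<noteq> 2/3"
  proof
    assume "x = 2/3"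
    with fa x(3) show False by simp
  qed
  ultimately show ?thesis by (intro exI[of _ x]) (auto simp: f_def)
qed

lemma sigma0_root:
  fixes r :: real
  assumes "r < r0"
  shows "sigma0 r > 2/3" and "(sigma0 r)^3 - (sigma0 r)^2 + r = 0"
  using cubic_root_gt_two_thirds_exists[OF assms] sigma0_eqI by auto

lemma sigma0_zero: "sigma0 0 = 1"
  by (rule sigma0_eqI) auto

lemma sigma0_has_derivative:
  fixes r :: real
  assumes r: "r < r0"
  shows "(sigma0 has_real_derivative inverse (2 * sigma0 r - 3 * (sigma0 r)^2)) (at r)"
proof -
  define \<sigma> where "\<sigma> = sigma0 r"
  define f where "f s = s^2 - s^3" for s :: real
  have \<sigma>: "\<sigma> > 2/3" "f \<sigma> = r" using sigma0_root[OF r] by (auto simp: \<sigma>_def f_def)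
  have inverse: "sigma0 (f z) = z" if "\<bar>z - \<sigma>\<bar> \<le> (\<sigma> - 2/3) / 2" for z
  proof (rule sigma0_eqI)
    show "2/3 < z" using abs_le_D2[OF that] \<sigma>(1) by (simp add: field_simps)
  qed (simp add: f_def)
  have isCont_f: "isCont f z" for z unfolding f_def[abs_def] by (intro continuous_intros)
  have "isCont sigma0 (f \<sigma>)"
    by (rule isCont_inverse_function[where f=f and g=sigma0 and x=\<sigma> and d="(\<sigma> - 2/3) / 2",
          OF _ inverse isCont_f]) (use \<sigma>(1) in simp)
  then have cont: "isCont sigma0 r" using \<sigma>(2) by simp
  have "\<sigma> * (2 - 3 * \<sigma>) < 0" using \<sigma>(1) by (intro mult_pos_neg) auto
  moreover have "2 * \<sigma> - 3 * \<sigma>^2 = \<sigma> * (2 - 3 * \<sigma>)" by algebra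
  ultimately have nonzero: "2 * \<sigma> - 3 * \<sigma>^2 \<noteq> 0" by linarith
  have deriv: "(f has_real_derivative 2 * \<sigma> - 3 * \<sigma>^2) (at (sigma0 r))"
    unfolding f_def[abs_def] \<sigma>_def by (auto intro!: derivative_eq_intros simp: power2_eq_square)
  have left_inverse: "f (sigma0 y) = y" if "r - 1 < y" "y < r0" for y
    using sigma0_root(2)[OF that(2)] by (simp add: f_def)
  have "(sigma0 has_real_derivative inverse (2 * \<sigma> - 3 * \<sigma>^2)) (at r)"
    by (rule DERIV_inverse_function[where a="r - 1", OF deriv nonzero _ r left_inverse cont]) simp_all
  then show ?thesis by (simp add: \<sigma>_def)
qed

lemma smooth_on_sigma0: "smooth_on {..<r0} sigma0"
proof -
  define q where "q s = inverse (2 * s - 3 * (s * s))" for s :: real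
  have dense: "dense_in_itself {..<r0}" "dense_in_itself {2/3::real<..}"
    by (auto intro: dense_in_itself_open)
  have "smooth_on {2/3<..} (\<lambda>s. 2 * s - 3 * (s * s))"
    using dense(2) by (intro smooth_on_diff smooth_on_cmult smooth_on_mult smooth_on_id)
  then have q: "smooth_on {2/3<..} q"
    unfolding q_def
  proof (rule smooth_on_inverse_compose[OF _ dense(2)])
    fix s :: real assume "s \<in> {2/3<..}"
    then have "s * (2 - 3 * s) < 0" by (intro mult_pos_neg) auto
    moreover have "2 * s - 3 * (s * s) = s * (2 - 3 * s)" by algebra
    ultimately show "2 * s - 3 * (s * s) \<noteq> 0" by linarith
  qed
  have "(sigma0 has_real_derivative q (sigma0 x)) (at x within {..<r0})" if "x \<in> {..<r0}" for x
    using has_field_derivative_at_within[OF sigma0_has_derivative] that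
    by (simp add: q_def power2_eq_square)
  moreover have "sigma0 ` {..<r0} \<subseteq> {2/3<..}" using sigma0_root(1) by auto
  then have "Ck_on k {..<r0} (\<lambda>x. q (sigma0 x))" if "Ck_on k {..<r0} sigma0" for k
    using Ck_on_compose[OF q that _ dense] by blast
  ultimately show ?thesis by (rule smooth_onI_deriv[OF dense(1), where f'="\<lambda>x. q (sigma0 x)"])
qed

text \<open>Eliminating \<open>y\<close> through \<open>l y = 2 \<sigma>\<^sup>2 (1 - \<sigma>)\<close> removes the apparent singularity of
  \<^const>\<open>gamma\<close> at \<open>y = 0\<close>.\<close>
lemma gamma_eq:
  fixes l y :: real
  assumes y: "l * y < 2 * r0"
  defines "\<sigma> \<equiv> sigma0 (l * y / 2)"
  shows "gamma l y = l^2 / 4 * (2 * \<sigma> - 1) * (inverse \<sigma>)^4"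
proof (cases "y = 0")
  case True
  then show ?thesis by (simp add: gamma_def \<sigma>_def sigma0_zero)
next
  case False
  have r: "l * y / 2 < r0" using y by simp
  have \<sigma>: "\<sigma> > 2/3" "l * y = 2 * \<sigma>^2 - 2 * \<sigma>^3"
    using sigma0_root[OF r] by (auto simp: \<sigma>_def algebra_simps)
  have "y^2 * (l^2 / 4 * (2 * \<sigma> - 1) * (inverse \<sigma>)^4)
      = (l * y)^2 / 4 * (2 * \<sigma> - 1) * (inverse \<sigma>)^4"
    by (simp add: power_mult_distrib)
  also have "\<dots> = (1 - \<sigma>)^2 * (2 * \<sigma> - 1)"
    unfolding \<sigma>(2) using \<sigma>(1)
    by (simp add: field_simps power2_eq_square power3_eq_cube power4_eq_xxxx)
  also have "\<dots> = - (\<sigma> - 1) * (3 * \<sigma> - 1) - l * y"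
    unfolding \<sigma>(2) by (simp add: algebra_simps power2_eq_square power3_eq_cube)
  finally show ?thesis
    using False by (simp add: gamma_def \<sigma>_def field_simps)
qed

lemma add_mult_gamma_pos:
  fixes l y :: real
  assumes l: "l > 0" and y: "l * y < 2 * r0"
  shows "l + y * gamma l y > 0"
proof -
  define \<sigma> where "\<sigma> = sigma0 (l * y / 2)"
  have r: "l * y / 2 < r0" using y by simp
  have \<sigma>: "\<sigma> > 2/3" "l * y = 2 * \<sigma>^2 - 2 * \<sigma>^3"
    using sigma0_root[OF r] by (auto simp: \<sigma>_def algebra_simps)
  have "l + y * gamma l y = l + (l * y) * (l / 4 * (2 * \<sigma> - 1) * (inverse \<sigma>)^4)"
    unfolding gamma_eq[OF y] \<sigma>_def by (simp add: power2_eq_square)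
  also have "\<dots> = l * (3 * \<sigma> - 1) / (2 * \<sigma>^2)"
    unfolding \<sigma>(2) using \<sigma>(1)
    by (simp add: field_simps power2_eq_square power3_eq_cube power4_eq_xxxx)
  also have "\<dots> > 0" using l \<sigma>(1) by (intro divide_pos_pos mult_pos_pos) auto
  finally show ?thesis .
qed

lemma dense_in_itself_gamma_domain: "dense_in_itself {y. l * y < 2 * r0}"
  by (intro dense_in_itself_open open_Collect_less continuous_intros)

lemma smooth_on_gamma: "smooth_on {y. l * y < 2 * r0} (gamma l)"
proof -
  define U where "U = {y. l * y < 2 * r0}"
  define s where "s y = sigma0 (l * y / 2)" for y
  have dense: "dense_in_itself U" unfolding U_def by (rule dense_in_itself_gamma_domain)
  have "smooth_on U (\<lambda>y. l / 2 * y)" by (rule smooth_on_cmult[OF smooth_on_id[OF dense] dense])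
  then have "smooth_on U (\<lambda>y. l * y / 2)" by (rule smooth_on_cong[OF _ dense]) simp
  moreover have "(\<lambda>y. l * y / 2) ` U \<subseteq> {..<r0}" by (auto simp: U_def)
  ultimately have s: "smooth_on U s"
    unfolding s_def by (rule smooth_on_compose[OF smooth_on_sigma0 _ _ dense dense_in_itself_open]) simp
  have "s y \<noteq> 0" if "y \<in> U" for y
    using sigma0_root(1)[of "l * y / 2"] that by (auto simp: s_def U_def)
  then have inv: "smooth_on U (\<lambda>y. inverse (s y) ^ 4)"
    by (intro smooth_on_power[OF smooth_on_inverse_compose[OF s dense] dense])
  have "smooth_on U (\<lambda>y. l^2 / 4 * (2 * s y - 1))"
    by (intro smooth_on_cmult[OF _ dense] smooth_on_diff[OF _ smooth_on_const dense]
        smooth_on_cmult[OF s dense] dense)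
  then have "smooth_on U (\<lambda>y. l^2 / 4 * (2 * s y - 1) * inverse (s y) ^ 4)"
    by (rule smooth_on_mult[OF _ inv dense])
  then have "smooth_on U (gamma l)"
    by (rule smooth_on_cong[OF _ dense]) (simp add: U_def s_def gamma_eq)
  then show ?thesis by (simp add: U_def)
qed

section \<open>The coefficient tau0\<close>

lemma has_real_derivative_divide_power:
  fixes a c r :: real
  assumes "a + r \<noteq> 0"
  shows "((\<lambda>r. c / (a + r) ^ Suc n) has_real_derivative
           - real (Suc n) * (c / (a + r) ^ Suc (Suc n))) (at r within S)"
proof -
  have "((\<lambda>r. c / (a + r) ^ Suc n) has_real_derivative
      - (c * (real (Suc n) * (a + r) ^ n) / ((a + r) ^ Suc n * (a + r) ^ Suc n))) (at r within S)"
    using assms by (auto intro!: derivative_eq_intros simp del: power_Suc)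
  also have "(a + r) ^ Suc n * (a + r) ^ Suc n = (a + r) ^ n * (a + r) ^ Suc (Suc n)"
    by (simp add: algebra_simps)
  also have "- (c * (real (Suc n) * (a + r) ^ n) / ((a + r) ^ n * (a + r) ^ Suc (Suc n)))
      = - real (Suc n) * (c / (a + r) ^ Suc (Suc n))"
    using assms by (simp add: field_simps del: power_Suc)
  finally show ?thesis .
qed

locale positive_profile =
  fixes l tb :: real and h :: "real \<Rightarrow> real"
  assumes l_pos: "l > 0" and tb_pos: "tb > 0"
    and h_cont: "continuous_on {-l..l} h"
    and h_pos: "\<And>x. x \<in> {-l..l} \<Longrightarrow> h x > 0"
begin

definition h_min :: real where "h_min = Inf (h ` {-l..l})"

definition admissible :: "real set" where "admissible = {-h_min<..}"

lemma h_min_le: "x \<in> {-l..l} \<Longrightarrow> h_min \<le> h x"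
  unfolding h_min_def
  by (rule cInf_lower) (auto intro!: bounded_imp_bdd_below compact_imp_bounded
      compact_continuous_image h_cont)

lemma h_min_attained: "h_min \<in> h ` {-l..l}"
  unfolding h_min_def using l_pos
  by (intro closed_contains_Inf) (auto intro!: bounded_imp_bdd_below compact_imp_bounded
      compact_imp_closed compact_continuous_image h_cont)

lemma h_min_pos: "h_min > 0"
  using h_min_attained h_pos by auto

lemma admissible_iff: "r \<in> admissible \<longleftrightarrow> (\<forall>x\<in>{-l..l}. h x + r > 0)"
  using h_min_le h_min_attained by (force simp: admissible_def)

lemma admissible_pos: "r \<in> admissible \<Longrightarrow> x \<in> {-l..l} \<Longrightarrow> h x + r > 0"
  by (simp add: admissible_iff)

lemma open_admissible: "open admissible"
  by (simp add: admissible_def)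

lemma convex_admissible: "convex admissible"
  by (simp add: admissible_def)

lemma dense_in_itself_admissible: "dense_in_itself admissible"
  by (rule dense_in_itself_open[OF open_admissible])

definition J :: "nat \<Rightarrow> real \<Rightarrow> real" where
  "J n r = integral {-l..l} (\<lambda>x. x^2 / (h x + r) ^ Suc n)"

lemma continuous_on_integrand:
  assumes "r \<in> admissible"
  shows "continuous_on {-l..l} (\<lambda>x. x^2 / (h x + r) ^ m)"
proof -
  have "h x + r > 0" if "x \<in> {-l..l}" for x using assms that by (simp add: admissible_iff)
  then have "\<forall>x\<in>{-l..l}. (h x + r) ^ m \<noteq> 0" by (metis order_less_irrefl power_eq_0_iff)
  then show ?thesis by (intro continuous_on_divide continuous_intros h_cont)
qed

lemma J_has_derivative:
  assumes r: "r \<in> admissible"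
  shows "(J n has_real_derivative - real (Suc n) * J (Suc n) r) (at r within admissible)"
proof -
  have deriv: "((\<lambda>r. x^2 / (h x + r) ^ Suc n) has_real_derivative
      - real (Suc n) * (x^2 / (h x + r) ^ Suc (Suc n))) (at r within admissible)"
    if "r \<in> admissible" "x \<in> cbox (-l) l" for r x
  proof (rule has_real_derivative_divide_power)
    show "h x + r \<noteq> 0" using admissible_pos[of r x] that by force
  qed
  have integrable: "(\<lambda>x. x^2 / (h x + r) ^ Suc n) integrable_on cbox (-l) l"
    if "r \<in> admissible" for r
    unfolding cbox_interval by (rule integrable_continuous_interval[OF continuous_on_integrand[OF that]])
  have cont: "continuous_on (admissible \<times> cbox (-l) l)
      (\<lambda>(r, x). - real (Suc n) * (x^2 / (h x + r) ^ Suc (Suc n)))"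
    unfolding split_beta
    by (intro continuous_intros continuous_on_compose2[OF h_cont])
       (auto simp: mem_Times_iff dest: admissible_pos)
  have "((\<lambda>r. integral (cbox (-l) l) (\<lambda>x. x^2 / (h x + r) ^ Suc n)) has_real_derivative
      integral (cbox (-l) l) (\<lambda>x. - real (Suc n) * (x^2 / (h x + r) ^ Suc (Suc n))))
      (at r within admissible)"
    by (rule leibniz_rule_field_derivative[OF deriv integrable cont r convex_admissible])
  then show ?thesis by (simp only: J_def[abs_def] integral_mult_right cbox_interval)
qed

lemma smooth_on_J: "smooth_on admissible (J n)"
proof -
  have "Ck_on k admissible (J n)" for k
  proof (induction k arbitrary: n)
    case 0
    show ?case by (simp only: Ck_on.simps) (rule DERIV_continuous_on[OF J_has_derivative])
  next
    case (Suc k)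
    show ?case
    proof (rule Ck_on_SucI[OF dense_in_itself_admissible])
      show "(J n has_real_derivative - real (Suc n) * J (Suc n) r) (at r within admissible)"
        if "r \<in> admissible" for r
        using J_has_derivative[OF that] .
      show "Ck_on k admissible (\<lambda>r. - real (Suc n) * J (Suc n) r)"
        by (rule Ck_on_mult[OF Ck_on_const Suc.IH dense_in_itself_admissible])
           (rule dense_in_itself_admissible)
    qed
  qed
  then show ?thesis by (simp add: smooth_on_def)
qed

lemma J_nonneg:
  assumes "r \<in> admissible"
  shows "J 0 r \<ge> 0"
  unfolding J_def
  by (rule Henstock_Kurzweil_Integration.integral_nonneg[OF
        integrable_continuous_interval[OF continuous_on_integrand[OF assms]]])
     (use assms in \<open>auto simp: admissible_iff intro!: divide_nonneg_pos\<close>)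

lemma tau0_eq_J: "tau0 l tb h r = sqrt (tb^2 + 1 / (2 * l) * J 0 r)"
  by (simp add: tau0_def J_def)

lemma smooth_on_tau0: "smooth_on admissible (tau0 l tb h)"
proof -
  have "smooth_on admissible (\<lambda>r. tb^2 + 1 / (2 * l) * J 0 r)"
    by (intro smooth_on_add[OF smooth_on_const smooth_on_cmult[OF smooth_on_J]]
        dense_in_itself_admissible)
  moreover have "(\<lambda>r. tb^2 + 1 / (2 * l) * J 0 r) ` admissible \<subseteq> {0<..}"
    using J_nonneg tb_pos l_pos by (auto intro!: add_pos_nonneg)
  ultimately show ?thesis
    unfolding tau0_eq_J[abs_def]
    by (rule smooth_on_compose[OF smooth_on_sqrt _ _ dense_in_itself_admissible
        dense_in_itself_open]) simp
qed

lemma tau0_pos: "r \<in> admissible \<Longrightarrow> tau0 l tb h r > 0"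
  using J_nonneg[of r] l_pos tb_pos unfolding tau0_eq_J
  by (intro real_sqrt_gt_zero add_pos_nonneg) auto

lemma tau0_antimono:
  assumes "r1 \<in> admissible" "r2 \<in> admissible" "r1 \<le> r2"
  shows "tau0 l tb h r2 \<le> tau0 l tb h r1"
proof -
  have "J 0 r2 \<le> J 0 r1"
    unfolding J_def
  proof (rule integral_le)
    show "(\<lambda>x. x^2 / (h x + r1) ^ Suc 0) integrable_on {-l..l}"
      by (rule integrable_continuous_interval[OF continuous_on_integrand[OF assms(1)]])
    show "(\<lambda>x. x^2 / (h x + r2) ^ Suc 0) integrable_on {-l..l}"
      by (rule integrable_continuous_interval[OF continuous_on_integrand[OF assms(2)]])
    show "x^2 / (h x + r2) ^ Suc 0 \<le> x^2 / (h x + r1) ^ Suc 0" if "x \<in> {-l..l}" for x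
      using assms that by (auto simp: admissible_iff intro!: divide_left_mono)
  qed
  then show ?thesis using l_pos by (simp add: tau0_eq_J divide_right_mono)
qed

lemma tau0'_eq_deriv_on:
  assumes "r \<in> admissible"
  shows "tau0' l tb h r = deriv_on admissible (tau0 l tb h) r"
proof -
  have "(tau0 l tb h has_real_derivative deriv_on admissible (tau0 l tb h) r) (at r)"
    using smooth_on_has_derivative[OF smooth_on_tau0 assms] at_within_open[OF assms open_admissible]
    by simp
  then show ?thesis by (simp add: tau0'_def DERIV_imp_deriv)
qed

lemma tau0_has_derivative:
  assumes "r \<in> admissible"
  shows "(tau0 l tb h has_real_derivative tau0' l tb h r) (at r)"
  using smooth_on_has_derivative[OF smooth_on_tau0 assms] at_within_open[OF assms open_admissible]
  by (simp add: tau0'_eq_deriv_on[OF assms])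

lemma smooth_on_tau0': "smooth_on admissible (tau0' l tb h)"
  by (rule smooth_on_cong[OF smooth_on_deriv_on[OF smooth_on_tau0] dense_in_itself_admissible])
     (simp add: tau0'_eq_deriv_on)

end

section \<open>Bounded Lipschitz functions and clamping\<close>

definition bounded_lipschitz :: "('a::metric_space \<Rightarrow> real) \<Rightarrow> bool" where
  "bounded_lipschitz f \<longleftrightarrow> (\<exists>M. \<forall>x. \<bar>f x\<bar> \<le> M) \<and> (\<exists>L. L-lipschitz_on UNIV f)"

lemma bounded_lipschitz_const: "bounded_lipschitz (\<lambda>x. c)"
  unfolding bounded_lipschitz_def by (blast intro: lipschitz_on_constant)

lemma bounded_lipschitz_add:
  assumes "bounded_lipschitz f" "bounded_lipschitz g"
  shows "bounded_lipschitz (\<lambda>x. f x + g x)"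
proof -
  obtain M1 L1 M2 L2 where M1: "\<And>x. \<bar>f x\<bar> \<le> M1" and L1: "L1-lipschitz_on UNIV f"
    and M2: "\<And>x. \<bar>g x\<bar> \<le> M2" and L2: "L2-lipschitz_on UNIV g"
    using assms unfolding bounded_lipschitz_def by blast
  have "\<bar>f x + g x\<bar> \<le> M1 + M2" for x
    by (rule order_trans[OF abs_triangle_ineq add_mono[OF M1 M2]])
  with lipschitz_on_add[OF L1 L2] show ?thesis
    unfolding bounded_lipschitz_def by blast
qed

lemma bounded_lipschitz_mult:
  assumes "bounded_lipschitz f" "bounded_lipschitz g"
  shows "bounded_lipschitz (\<lambda>x. f x * g x)"
proof -
  obtain M1 L1 M2 L2 where M1: "\<And>x. \<bar>f x\<bar> \<le> M1" and L1: "L1-lipschitz_on UNIV f"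
    and M2: "\<And>x. \<bar>g x\<bar> \<le> M2" and L2: "L2-lipschitz_on UNIV g"
    using assms unfolding bounded_lipschitz_def by blast
  have M: "M1 \<ge> 0" "M2 \<ge> 0"
    by (rule order_trans[OF abs_ge_zero M1], rule order_trans[OF abs_ge_zero M2])
  have "\<bar>f x * g x\<bar> \<le> M1 * M2" for x
    unfolding abs_mult using M1 M2 M by (intro mult_mono) auto
  moreover have "(M1 * L2 + M2 * L1)-lipschitz_on UNIV (\<lambda>x. f x * g x)"
  proof (rule lipschitz_onI)
    fix x y
    have "f x * g x - f y * g y = f x * (g x - g y) + g y * (f x - f y)"
      by (simp add: algebra_simps)
    then have "\<bar>f x * g x - f y * g y\<bar> \<le> \<bar>f x * (g x - g y)\<bar> + \<bar>g y * (f x - f y)\<bar>"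
      by (simp only: abs_triangle_ineq)
    also have "\<dots> = \<bar>f x\<bar> * \<bar>g x - g y\<bar> + \<bar>g y\<bar> * \<bar>f x - f y\<bar>"
      by (simp add: abs_mult)
    also have "\<dots> \<le> M1 * (L2 * dist x y) + M2 * (L1 * dist x y)"
      using lipschitz_onD[OF L1, of x y] lipschitz_onD[OF L2, of x y] M1 M2 M
      by (intro add_mono mult_mono) (auto simp: dist_real_def)
    finally show "dist (f x * g x) (f y * g y) \<le> (M1 * L2 + M2 * L1) * dist x y"
      by (simp add: dist_real_def algebra_simps)
  qed (use M lipschitz_on_nonneg[OF L1] lipschitz_on_nonneg[OF L2] in simp)
  ultimately show ?thesis unfolding bounded_lipschitz_def by blast
qed

lemma bounded_lipschitz_smooth_compose:
  fixes m :: "'a::metric_space \<Rightarrow> real"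
  assumes g: "smooth_on V g" "{c..d} \<subseteq> V"
    and m: "\<And>x. m x \<in> {c..d}" "K-lipschitz_on UNIV m"
  shows "bounded_lipschitz (\<lambda>x. g (m x))"
proof -
  have "continuous_on {c..d} g"
    by (rule continuous_on_subset[OF smooth_on_imp_continuous_on[OF g(1)] g(2)])
  then have "compact (g ` {c..d})" by (rule compact_continuous_image[OF _ compact_Icc])
  then obtain M where M: "\<And>z. z \<in> {c..d} \<Longrightarrow> \<bar>g z\<bar> \<le> M"
    unfolding compact_eq_bounded_closed bounded_iff by fastforce
  have "continuous_on {c..d} (deriv_on V g)"
    by (rule continuous_on_subset[OF smooth_on_imp_continuous_on[OF smooth_on_deriv_on[OF g(1)]] g(2)])
  then have "compact (deriv_on V g ` {c..d})" by (rule compact_continuous_image[OF _ compact_Icc])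
  then obtain D where D: "\<And>z. z \<in> {c..d} \<Longrightarrow> \<bar>deriv_on V g z\<bar> \<le> D"
    unfolding compact_eq_bounded_closed bounded_iff by fastforce
  have "D \<ge> 0" using D[of "m undefined"] m(1) by force
  have "D-lipschitz_on (m ` UNIV) g"
  proof (rule lipschitz_onI)
    fix u v assume "u \<in> range m" "v \<in> range m"
    then have uv: "u \<in> {c..d}" "v \<in> {c..d}" using m(1) by auto
    have "(g has_real_derivative deriv_on V g z) (at z within {c..d})" if "z \<in> {c..d}" for z
      using has_field_derivative_subset[OF smooth_on_has_derivative[OF g(1)] g(2)] g(2) that
      by blast
    then have "norm (g u - g v) \<le> D * norm (u - v)"
      using D uv by (intro field_differentiable_bound[of "{c..d}"]) auto
    then show "dist (g u) (g v) \<le> D * dist u v" by (simp add: dist_norm)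
  qed (fact \<open>D \<ge> 0\<close>)
  from lipschitz_on_compose2[OF m(2) this] M m(1) show ?thesis
    unfolding bounded_lipschitz_def by blast
qed

lemma has_vector_derivative_fst_snd:
  assumes "(u has_vector_derivative (v1, v2)) F"
  shows "((\<lambda>t. fst (u t)) has_vector_derivative v1) F"
    and "((\<lambda>t. snd (u t)) has_vector_derivative v2) F"
  using has_derivative_fst[OF assms[unfolded has_vector_derivative_def]]
    has_derivative_snd[OF assms[unfolded has_vector_derivative_def]]
  by (simp_all add: has_vector_derivative_def)

section \<open>The oscillator equation\<close>

lemma exists_gt_mult_less:
  fixes e x y :: real
  assumes "e \<ge> 0" "e * x < y"
  shows "\<exists>z>x. e * z < y"
proof (intro exI conjI)
  define q where "q = y - e * x"
  have q: "q > 0" "e * q \<ge> 0" using assms by (simp_all add: q_def)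
  show "x < x + q / (2 * (e + 1))" using q assms(1) by simp
  have "e * q < 2 * (e + 1) * q" using q by (simp add: algebra_simps)
  then have "e * (q / (2 * (e + 1))) < q" using assms(1) by (simp add: field_simps)
  then show "e * (x + q / (2 * (e + 1))) < y" by (simp add: q_def algebra_simps)
qed

lemma clamp_has_real_derivative:
  fixes a b x :: real
  assumes "a < x" "x < b"
  shows "(clamp a b has_real_derivative 1) (at x)"
proof (rule has_field_derivative_transform_within_open[where S="{a<..<b}"])
  show "((\<lambda>x. x) has_real_derivative 1) (at x)" by (rule DERIV_ident)
qed (use assms in \<open>auto simp: clamp_cancel_cbox\<close>)

lemma clamp_eq_self: "\<bar>x\<bar> \<le> C \<Longrightarrow> clamp (-C) C x = (x::real)"
  by (simp add: clamp_cancel_cbox abs_le_iff)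

lemma continuous_on_clamp: "continuous_on S (clamp (a::real) b)"
proof (rule lipschitz_on_continuous_on)
  show "1-lipschitz_on S (clamp a b)" by (rule lipschitz_onI) (simp_all add: dist_clamps_le_dist_args)
qed

lemma lipschitz_on_mult_clamp:
  fixes m :: "'a::metric_space \<Rightarrow> real"
  assumes "1-lipschitz_on UNIV m" "e \<ge> 0"
  shows "e-lipschitz_on UNIV (\<lambda>p. e * clamp a b (m p))"
proof (rule lipschitz_onI)
  fix p q
  have "dist (e * clamp a b (m p)) (e * clamp a b (m q)) = e * dist (clamp a b (m p)) (clamp a b (m q))"
    using assms(2) by (simp add: dist_real_def abs_mult flip: right_diff_distrib)
  also have "\<dots> \<le> e * dist (m p) (m q)"
    using assms(2) dist_clamps_le_dist_args by (rule mult_left_mono[rotated])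
  also have "\<dots> \<le> e * dist p q"
    using lipschitz_onD[OF assms(1)] assms(2) by (simp add: mult_left_mono)
  finally show "dist (e * clamp a b (m p)) (e * clamp a b (m q)) \<le> e * dist p q" .
qed (fact assms(2))

lemma mult_mem_Icc_of_abs_le:
  fixes C e x :: real
  assumes "\<bar>x\<bar> \<le> C" "e \<ge> 0"
  shows "e * x \<in> {- (e * C)..e * C}"
proof -
  have "\<bar>e * x\<bar> \<le> e * C" using assms by (simp add: abs_mult mult_left_mono)
  then show ?thesis unfolding abs_le_iff by auto
qed

lemma abs_clamp_le: "C \<ge> 0 \<Longrightarrow> \<bar>clamp (-C) C x\<bar> \<le> (C::real)"
  using clamp_in_interval[of "-C" C x] by (simp add: abs_le_iff)

lemma bounded_lipschitz_mult_clamp_compose: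
  fixes m :: "'a::metric_space \<Rightarrow> real"
  assumes "smooth_on V g" "{- (e * C)..e * C} \<subseteq> V" "1-lipschitz_on UNIV m" "C \<ge> 0" "e \<ge> 0"
  shows "bounded_lipschitz (\<lambda>p. g (e * clamp (-C) C (m p)))"
  by (rule bounded_lipschitz_smooth_compose[OF assms(1,2)
        mult_mem_Icc_of_abs_le[OF abs_clamp_le[OF assms(4)] assms(5)] lipschitz_on_mult_clamp[OF assms(3,5)]])

lemma lipschitz_on_fst: "1-lipschitz_on UNIV fst"
  by (rule lipschitz_onI) (simp_all add: dist_fst_le)

lemma lipschitz_on_snd: "1-lipschitz_on UNIV snd"
  by (rule lipschitz_onI) (simp_all add: dist_snd_le)

lemma bounded_lipschitz_Pair:
  assumes "bounded_lipschitz f" "bounded_lipschitz g"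
  shows "bounded (range (\<lambda>p. (f p, g p)))" and "\<exists>L. L-lipschitz_on UNIV (\<lambda>p. (f p, g p))"
proof -
  obtain M1 L1 M2 L2 where M1: "\<And>x. \<bar>f x\<bar> \<le> M1" and L1: "L1-lipschitz_on UNIV f"
    and M2: "\<And>x. \<bar>g x\<bar> \<le> M2" and L2: "L2-lipschitz_on UNIV g"
    using assms unfolding bounded_lipschitz_def by blast
  have "norm (f p, g p) \<le> M1 + M2" for p
    using norm_Pair_le[of "f p" "g p"] M1[of p] M2[of p] by simp
  then show "bounded (range (\<lambda>p. (f p, g p)))" unfolding bounded_iff by blast
  show "\<exists>L. L-lipschitz_on UNIV (\<lambda>p. (f p, g p))" using lipschitz_on_Pair[OF L1 L2] by blast
qed

lemma has_real_derivative_within_Ici_at: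
  fixes f :: "real \<Rightarrow> real"
  assumes "t > 0" "(f has_real_derivative D) (at t within {0..})"
  shows "(f has_real_derivative D) (at t)"
  using assms at_within_interior[of t "{0..}"] by simp

locale oscillator = positive_profile +
  fixes eps d0 :: real
  assumes eps_nonneg: "eps \<ge> 0"
    and h_min_gt: "h_min - eps * \<bar>d0\<bar> > 0"
    and velocity_bound: "eps * \<bar>d0\<bar> < tau0 l tb h (eps * \<bar>d0\<bar>) * (2 * r0 / l)"
begin

abbreviation T where "T \<equiv> tau0 l tb h"
abbreviation T' where "T' \<equiv> tau0' l tb h"

definition accel :: "real \<Rightarrow> real \<Rightarrow> real" where
  "accel a b = - (l * b + a + eps * (T (eps * a) * T' (eps * a) + gamma l (eps * b)) * b^2)
     * inverse (T (eps * a))^2"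

lemma accel_iff:
  assumes "eps * a \<in> admissible"
  shows "(T (eps * a))^2 * c + l * b + a + eps * (T (eps * a) * T' (eps * a) + gamma l (eps * b)) * b^2 = 0
    \<longleftrightarrow> c = accel a b"
  using tau0_pos[OF assms] by (auto simp: accel_def field_simps)

lemma accel_eq_products:
  "accel a b = (-1) * ((l * b + a + eps * ((T (eps * a) * T' (eps * a) + gamma l (eps * b)) * (b * b)))
     * (inverse (T (eps * a)) * inverse (T (eps * a))))"
  by (simp add: accel_def power2_eq_square algebra_simps)

lemma smooth_on_tau0_mult_tau0': "smooth_on admissible (\<lambda>r. T r * T' r)"
  by (rule smooth_on_mult[OF smooth_on_tau0 smooth_on_tau0' dense_in_itself_admissible])

lemma smooth_on_inverse_tau0: "smooth_on admissible (\<lambda>r. inverse (T r))"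
  by (rule smooth_on_inverse_compose[OF smooth_on_tau0 dense_in_itself_admissible])
     (metis tau0_pos less_irrefl)

definition B0 :: real where "B0 = \<bar>d0\<bar> / T (eps * \<bar>d0\<bar>)"

lemma d0_admissible: "eps * \<bar>d0\<bar> \<in> admissible"
proof -
  have "0 \<le> eps * \<bar>d0\<bar>" using eps_nonneg by simp
  then show ?thesis using h_min_pos by (simp add: admissible_def)
qed

lemma B0_nonneg: "B0 \<ge> 0"
  using tau0_pos[OF d0_admissible] by (simp add: B0_def)

text \<open>Half-widths of a box around the data on which the coefficients are defined and which
  the solution never leaves; any \<open>A\<close>, \<open>B\<close> with these properties would do.\<close>
definition A :: real where "A = (SOME A. A > \<bar>d0\<bar> \<and> eps * A < h_min)"
definition B :: real where "B = (SOME B. B > B0 \<and> l * eps * B < 2 * r0)"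

lemma A_bounds: "\<bar>d0\<bar> < A" "eps * A < h_min"
proof -
  have "\<exists>A. A > \<bar>d0\<bar> \<and> eps * A < h_min"
    using exists_gt_mult_less[OF eps_nonneg, of "\<bar>d0\<bar>" h_min] h_min_gt by auto
  then have "A > \<bar>d0\<bar> \<and> eps * A < h_min" unfolding A_def by (rule someI_ex)
  then show "\<bar>d0\<bar> < A" "eps * A < h_min" by simp_all
qed

lemma B_bounds: "B0 < B" "l * eps * B < 2 * r0"
proof -
  have "l * eps * B0 < 2 * r0"
    using velocity_bound tau0_pos[OF d0_admissible] l_pos by (simp add: B0_def field_simps)
  then have "\<exists>B. B > B0 \<and> l * eps * B < 2 * r0"
    using exists_gt_mult_less[of "l * eps" B0 "2 * r0"] l_pos eps_nonneg by auto
  then have "B > B0 \<and> l * eps * B < 2 * r0" unfolding B_def by (rule someI_ex)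
  then show "B0 < B" "l * eps * B < 2 * r0" by simp_all
qed

lemma A_B_pos: "A > 0" "B > 0"
  using A_bounds(1) B_bounds(1) B0_nonneg by linarith+

lemma Icc_eps_A_subset_admissible: "{- (eps * A)..eps * A} \<subseteq> admissible"
  using A_bounds(2) h_min_pos by (auto simp: admissible_def)

lemma Icc_eps_B_subset_gamma_domain: "{- (eps * B)..eps * B} \<subseteq> {y. l * y < 2 * r0}"
proof
  fix y assume "y \<in> {- (eps * B)..eps * B}"
  then have "l * y \<le> l * (eps * B)" using l_pos by (intro mult_left_mono) auto
  then show "y \<in> {y. l * y < 2 * r0}" using B_bounds(2) by (simp add: mult.assoc)
qed

lemma mult_eps_mem_admissible: "\<bar>x\<bar> \<le> A \<Longrightarrow> eps * x \<in> admissible"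
  using Icc_eps_A_subset_admissible mult_mem_Icc_of_abs_le[OF _ eps_nonneg] by blast

lemma mult_eps_gamma_domain: "\<bar>y\<bar> \<le> B \<Longrightarrow> l * (eps * y) < 2 * r0"
  using Icc_eps_B_subset_gamma_domain mult_mem_Icc_of_abs_le[OF _ eps_nonneg] by blast

definition truncated_field :: "real \<times> real \<Rightarrow> real \<times> real" where
  "truncated_field p =
     (clamp (-B) B (snd p), accel (clamp (-A) A (fst p)) (clamp (-B) B (snd p)))"

lemma bounded_lipschitz_truncated_accel:
  "bounded_lipschitz (\<lambda>p. accel (clamp (-A) A (fst p)) (clamp (-B) B (snd p)))"
proof -
  have id: "smooth_on UNIV (\<lambda>x. x)" by (rule smooth_on_id[OF dense_in_itself_open[OF open_UNIV]])
  have a: "bounded_lipschitz (\<lambda>p. clamp (-A) A (fst p))"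
    using bounded_lipschitz_mult_clamp_compose[OF id subset_UNIV lipschitz_on_fst, where C=A and e=1]
      A_B_pos by simp
  have b: "bounded_lipschitz (\<lambda>p. clamp (-B) B (snd p))"
    using bounded_lipschitz_mult_clamp_compose[OF id subset_UNIV lipschitz_on_snd, where C=B and e=1]
      A_B_pos by simp
  have P: "bounded_lipschitz (\<lambda>p. T (eps * clamp (-A) A (fst p)) * T' (eps * clamp (-A) A (fst p)))"
    by (rule bounded_lipschitz_mult_clamp_compose[OF smooth_on_tau0_mult_tau0'
          Icc_eps_A_subset_admissible lipschitz_on_fst less_imp_le[OF A_B_pos(1)] eps_nonneg])
  have W: "bounded_lipschitz (\<lambda>p. inverse (T (eps * clamp (-A) A (fst p))))"
    by (rule bounded_lipschitz_mult_clamp_compose[OF smooth_on_inverse_tau0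
          Icc_eps_A_subset_admissible lipschitz_on_fst less_imp_le[OF A_B_pos(1)] eps_nonneg])
  have G: "bounded_lipschitz (\<lambda>p. gamma l (eps * clamp (-B) B (snd p)))"
    by (rule bounded_lipschitz_mult_clamp_compose[OF smooth_on_gamma Icc_eps_B_subset_gamma_domain
          lipschitz_on_snd less_imp_le[OF A_B_pos(2)] eps_nonneg])
  have "bounded_lipschitz (\<lambda>p. (-1) * ((l * clamp (-B) B (snd p) + clamp (-A) A (fst p)
      + eps * ((T (eps * clamp (-A) A (fst p)) * T' (eps * clamp (-A) A (fst p))
               + gamma l (eps * clamp (-B) B (snd p)))
             * (clamp (-B) B (snd p) * clamp (-B) B (snd p))))
      * (inverse (T (eps * clamp (-A) A (fst p))) * inverse (T (eps * clamp (-A) A (fst p))))))"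
    by (intro bounded_lipschitz_mult bounded_lipschitz_add bounded_lipschitz_const a b P W G)
  then show ?thesis by (simp only: accel_eq_products)
qed

lemma truncated_field_lipschitz: "\<exists>L. L-lipschitz_on UNIV truncated_field"
  and truncated_field_bounded: "bounded (range truncated_field)"
proof -
  have b: "bounded_lipschitz (\<lambda>p. 1 * clamp (-B) B (snd p))"
    by (rule bounded_lipschitz_mult_clamp_compose[OF smooth_on_id[OF dense_in_itself_open[OF open_UNIV]]
          subset_UNIV lipschitz_on_snd less_imp_le[OF A_B_pos(2)]]) simp
  show "\<exists>L. L-lipschitz_on UNIV truncated_field" "bounded (range truncated_field)"
    unfolding truncated_field_def[abs_def]
    using bounded_lipschitz_Pair[OF b bounded_lipschitz_truncated_accel] by simp_all
qed

lemma truncated_solution_has_derivative: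
  assumes "ivp_solution truncated_field (d0, 0) u" "t \<ge> 0"
  shows "((\<lambda>t. fst (u t)) has_real_derivative clamp (-B) B (snd (u t))) (at t within {0..})"
    and "((\<lambda>t. snd (u t)) has_real_derivative
           accel (clamp (-A) A (fst (u t))) (clamp (-B) B (snd (u t)))) (at t within {0..})"
  using has_vector_derivative_fst_snd[of u] assms
  by (auto simp: ivp_solution_def truncated_field_def has_real_derivative_iff_has_vector_derivative)

text \<open>The function \<open>\<kappa>\<close> (the identity or a clamp) lets the same energy computation serve the
  original and the truncated equation.\<close>
lemma energy_has_derivative:
  fixes a b \<kappa> :: "real \<Rightarrow> real"
  assumes a': "(a has_real_derivative b s) (at s)"
    and b': "(b has_real_derivative accel (a s) (b s)) (at s)"
    and \<kappa>: "(\<kappa> has_real_derivative 1) (at (a s))" "\<kappa> (a s) = a s"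
    and adm: "eps * a s \<in> admissible" and dom: "l * (eps * b s) < 2 * r0"
  shows "\<exists>D. ((\<lambda>s. (T (eps * \<kappa> (a s)))^2 * (b s)^2 / 2 + (a s)^2 / 2) has_real_derivative D) (at s)
    \<and> D \<le> 0"
proof -
  have T': "(T has_real_derivative T' (eps * \<kappa> (a s))) (at (eps * \<kappa> (a s)))"
    using tau0_has_derivative[OF adm] \<kappa>(2) by simp
  have deriv: "((\<lambda>s. (T (eps * \<kappa> (a s)))^2 * (b s)^2 / 2 + (a s)^2 / 2) has_real_derivative
      T (eps * a s) * T' (eps * a s) * eps * (b s)^3 + b s * ((T (eps * a s))^2 * accel (a s) (b s))
        + a s * b s) (at s)"
    using DERIV_chain2[OF T' DERIV_cmult[OF DERIV_chain2[OF \<kappa>(1) a']]] a' b' \<kappa>(2)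
    by (auto intro!: derivative_eq_intros simp: power2_eq_square power3_eq_cube algebra_simps)
  have acc: "(T (eps * a s))^2 * accel (a s) (b s)
      = - (l * b s + a s) - eps * (T (eps * a s) * T' (eps * a s) + gamma l (eps * b s)) * (b s)^2"
    using accel_iff[OF adm, of "accel (a s) (b s)" "b s"] by (simp add: algebra_simps)
  have "T (eps * a s) * T' (eps * a s) * eps * (b s)^3 + b s * ((T (eps * a s))^2 * accel (a s) (b s))
        + a s * b s = - ((b s)^2 * (l + eps * b s * gamma l (eps * b s)))"
    unfolding acc by (simp add: power2_eq_square power3_eq_cube algebra_simps)
  moreover have "- ((b s)^2 * (l + eps * b s * gamma l (eps * b s))) \<le> 0"
    using add_mult_gamma_pos[OF l_pos, of "eps * b s"] dom by (simp add: mult.assoc)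
  ultimately show ?thesis using deriv by auto
qed

lemma energy_bound:
  fixes a b \<kappa> :: "real \<Rightarrow> real"
  assumes t: "t \<ge> 0"
    and cont: "continuous_on {0..t} a" "continuous_on {0..t} b"
      "continuous_on {0..t} (\<lambda>s. T (eps * \<kappa> (a s)))"
    and init: "a 0 = d0" "b 0 = 0"
    and ode: "\<And>s. 0 < s \<Longrightarrow> s < t \<Longrightarrow> (a has_real_derivative b s) (at s) \<and>
       (b has_real_derivative accel (a s) (b s)) (at s) \<and> (\<kappa> has_real_derivative 1) (at (a s)) \<and>
       \<kappa> (a s) = a s \<and> eps * a s \<in> admissible \<and> l * (eps * b s) < 2 * r0"
    and \<kappa>: "\<And>x. \<bar>x\<bar> \<le> \<bar>d0\<bar> \<Longrightarrow> \<kappa> x = x"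
  shows "\<bar>a t\<bar> \<le> \<bar>d0\<bar> \<and> \<bar>b t\<bar> \<le> B0"
proof -
  define E where "E s = (T (eps * \<kappa> (a s)))^2 * (b s)^2 / 2 + (a s)^2 / 2" for s
  have "E t \<le> E 0"
  proof (rule DERIV_nonpos_imp_decreasing_open[OF t])
    show "continuous_on {0..t} E" unfolding E_def by (intro continuous_intros cont) auto
    show "\<exists>D. (E has_real_derivative D) (at s) \<and> D \<le> 0" if "0 < s" "s < t" for s
      unfolding E_def[abs_def] using ode[OF that] energy_has_derivative by blast
  qed
  then have "(T (eps * \<kappa> (a t)))^2 * (b t)^2 + (a t)^2 \<le> d0^2" by (simp add: E_def init)
  moreover have "(T (eps * \<kappa> (a t)))^2 * (b t)^2 \<ge> 0" by simp
  ultimately have "(a t)^2 \<le> d0^2" by linarith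
  then have a: "\<bar>a t\<bar> \<le> \<bar>d0\<bar>" by (simp add: abs_le_square_iff)
  then have adm: "eps * a t \<in> admissible" using A_bounds(1) by (intro mult_eps_mem_admissible) simp
  have "eps * a t \<le> eps * \<bar>d0\<bar>" using a eps_nonneg by (intro mult_left_mono) auto
  then have T0: "T (eps * \<bar>d0\<bar>) \<le> T (eps * a t)" by (rule tau0_antimono[OF adm d0_admissible])
  have "(T (eps * a t))^2 * (b t)^2 + (a t)^2 \<le> d0^2"
    using \<open>(T (eps * \<kappa> (a t)))^2 * (b t)^2 + (a t)^2 \<le> d0^2\<close> \<kappa>[OF a] by simp
  then have "(T (eps * a t))^2 * (b t)^2 \<le> d0^2" using zero_le_power2[of "a t"] by linarith
  moreover have "(T (eps * \<bar>d0\<bar>) * b t)^2 \<le> (T (eps * a t))^2 * (b t)^2"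
    using T0 tau0_pos[OF d0_admissible] by (simp add: power_mult_distrib mult_right_mono power_mono)
  ultimately have "\<bar>T (eps * \<bar>d0\<bar>) * b t\<bar> \<le> \<bar>d0\<bar>" by (simp add: abs_le_square_iff)
  then have "\<bar>b t\<bar> \<le> B0"
    using tau0_pos[OF d0_admissible] by (simp add: B0_def abs_mult field_simps)
  with a show ?thesis by simp
qed

lemma truncated_solution_energy_bound:
  assumes u: "ivp_solution truncated_field (d0, 0) u" and t: "t \<ge> 0"
    and box: "\<And>s. 0 \<le> s \<Longrightarrow> s < t \<Longrightarrow> \<bar>fst (u s)\<bar> < A \<and> \<bar>snd (u s)\<bar> < B"
  shows "\<bar>fst (u t)\<bar> \<le> \<bar>d0\<bar> \<and> \<bar>snd (u t)\<bar> \<le> B0"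
proof -
  define a where "a s = fst (u s)" for s
  define b where "b s = snd (u s)" for s
  have cont_u: "continuous_on {0..t} u"
    using ivp_solution_continuous_on[OF u] by (rule continuous_on_subset) auto
  have "continuous_on {0..t} (\<lambda>s. eps * clamp (-A) A (a s))"
    unfolding a_def by (intro continuous_intros continuous_on_compose2[OF continuous_on_clamp] cont_u) auto
  moreover have "(\<lambda>s. eps * clamp (-A) A (a s)) ` {0..t} \<subseteq> admissible"
    using mult_eps_mem_admissible[OF abs_clamp_le] A_B_pos by auto
  ultimately have cont_T: "continuous_on {0..t} (\<lambda>s. T (eps * clamp (-A) A (a s)))"
    by (rule continuous_on_compose2[OF smooth_on_imp_continuous_on[OF smooth_on_tau0]])
  have ode: "(a has_real_derivative b s) (at s) \<and>
      (b has_real_derivative accel (a s) (b s)) (at s) \<and>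
      (clamp (-A) A has_real_derivative 1) (at (a s)) \<and> clamp (-A) A (a s) = a s \<and>
      eps * a s \<in> admissible \<and> l * (eps * b s) < 2 * r0" if s: "0 < s" "s < t" for s
  proof -
    have in_box: "\<bar>a s\<bar> < A" "\<bar>b s\<bar> < B" using box[of s] s by (auto simp: a_def b_def)
    then have clamp_id: "clamp (-A) A (a s) = a s" "clamp (-B) B (b s) = b s"
      by (simp_all add: clamp_eq_self)
    show ?thesis
      using truncated_solution_has_derivative[OF u, of s, THEN has_real_derivative_within_Ici_at[OF s(1)]]
        clamp_has_real_derivative[of "-A" "a s" A] in_box clamp_id s
        mult_eps_mem_admissible[of "a s"] mult_eps_gamma_domain[of "b s"]
      by (auto simp: a_def[abs_def] b_def[abs_def])
  qed
  have "\<bar>a t\<bar> \<le> \<bar>d0\<bar> \<and> \<bar>b t\<bar> \<le> B0"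
  proof (rule energy_bound[OF t _ _ cont_T _ _ ode])
    show "continuous_on {0..t} a" "continuous_on {0..t} b"
      unfolding a_def b_def by (intro continuous_intros cont_u)+
    show "a 0 = d0" "b 0 = 0" using u by (simp_all add: ivp_solution_def a_def b_def)
    show "clamp (-A) A x = x" if "\<bar>x\<bar> \<le> \<bar>d0\<bar>" for x
      using that A_bounds(1) by (intro clamp_eq_self) simp
  qed
  then show ?thesis by (simp add: a_def b_def)
qed

text \<open>At the first time the solution reaches the boundary of the box, the energy bound places
  it strictly inside the box.\<close>
lemma truncated_solution_in_box:
  assumes u: "ivp_solution truncated_field (d0, 0) u" and t: "t \<ge> 0"
  shows "\<bar>fst (u t)\<bar> < A \<and> \<bar>snd (u t)\<bar> < B"
proof (rule ccontr)
  assume outside: "\<not> (\<bar>fst (u t)\<bar> < A \<and> \<bar>snd (u t)\<bar> < B)"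
  define g where "g s = max (\<bar>fst (u s)\<bar> - A) (\<bar>snd (u s)\<bar> - B)" for s
  define X where "X = {0..} \<inter> g -` {0..}"
  have "continuous_on {0..} g"
    unfolding g_def by (intro continuous_intros ivp_solution_continuous_on[OF u])
  then have "closed X" unfolding X_def by (rule continuous_closed_preimage) auto
  moreover have "t \<in> X" using outside t by (auto simp: X_def g_def)
  moreover have X_bdd: "bdd_below X" by (rule bdd_belowI[of _ 0]) (auto simp: X_def)
  ultimately have first_exit: "Inf X \<in> X" by (intro closed_contains_Inf) auto
  have "\<bar>fst (u s)\<bar> < A \<and> \<bar>snd (u s)\<bar> < B" if "0 \<le> s" "s < Inf X" for s
  proof (rule ccontr)
    assume "\<not> (\<bar>fst (u s)\<bar> < A \<and> \<bar>snd (u s)\<bar> < B)"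
    then have "s \<in> X" using that by (auto simp: X_def g_def)
    then show False using cInf_lower[OF _ X_bdd] that by fastforce
  qed
  then have "\<bar>fst (u (Inf X))\<bar> \<le> \<bar>d0\<bar> \<and> \<bar>snd (u (Inf X))\<bar> \<le> B0"
    using first_exit by (intro truncated_solution_energy_bound[OF u]) (auto simp: X_def)
  then have "g (Inf X) < 0" using A_bounds(1) B_bounds(1) by (simp add: g_def)
  with first_exit show False by (simp add: X_def)
qed

lemma Ck_on_solution:
  assumes a': "\<And>t. t \<ge> 0 \<Longrightarrow> (a has_real_derivative b t) (at t within {0..})"
    and b': "\<And>t. t \<ge> 0 \<Longrightarrow> (b has_real_derivative accel (a t) (b t)) (at t within {0..})"
    and adm: "\<And>t. t \<ge> 0 \<Longrightarrow> eps * a t \<in> admissible"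
    and dom: "\<And>t. t \<ge> 0 \<Longrightarrow> l * (eps * b t) < 2 * r0"
  shows "Ck_on k {0..} a \<and> Ck_on k {0..} b"
proof (induction k)
  case 0
  have "continuous_on {0..} a" by (rule DERIV_continuous_on, rule a') simp
  moreover have "continuous_on {0..} b" by (rule DERIV_continuous_on, rule b') simp
  ultimately show ?case by simp
next
  case (Suc k)
  note dense = dense_in_itself_Ici
  have a: "Ck_on k {0..} a" and b: "Ck_on k {0..} b" using Suc by auto
  have "Ck_on k {0..} (\<lambda>t. g (eps * a t))" if "smooth_on admissible g" for g
    using Ck_on_compose[OF that Ck_on_mult[OF Ck_on_const a dense] _ dense dense_in_itself_admissible]
      adm dense by auto
  then have P: "Ck_on k {0..} (\<lambda>t. T (eps * a t) * T' (eps * a t))"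
    and W: "Ck_on k {0..} (\<lambda>t. inverse (T (eps * a t)))"
    using smooth_on_tau0_mult_tau0' smooth_on_inverse_tau0 by auto
  have G: "Ck_on k {0..} (\<lambda>t. gamma l (eps * b t))"
    using Ck_on_compose[OF smooth_on_gamma Ck_on_mult[OF Ck_on_const b dense] _ dense
        dense_in_itself_gamma_domain] dom dense by auto
  have "Ck_on k {0..} (\<lambda>t. (-1) * ((l * b t + a t + eps * ((T (eps * a t) * T' (eps * a t)
      + gamma l (eps * b t)) * (b t * b t))) * (inverse (T (eps * a t)) * inverse (T (eps * a t)))))"
    by (intro Ck_on_mult Ck_on_add Ck_on_const a b P W G dense)
  then have "Ck_on k {0..} (\<lambda>t. accel (a t) (b t))" by (simp only: accel_eq_products)
  then show ?case using Ck_on_SucI[OF dense a'] Ck_on_SucI[OF dense b'] b by auto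
qed

definition solves_system :: "(real \<Rightarrow> real) \<Rightarrow> (real \<Rightarrow> real) \<Rightarrow> bool" where
  "solves_system a b \<longleftrightarrow> a 0 = d0 \<and> b 0 = 0 \<and>
     (\<forall>t\<ge>0. (a has_real_derivative b t) (at t within {0..}) \<and>
       (b has_real_derivative accel (a t) (b t)) (at t within {0..}) \<and>
       eps * a t \<in> admissible \<and> l * (eps * b t) < 2 * r0)"

lemma solves_system_is_global_solution:
  assumes "solves_system a b"
  shows "is_global_solution l tb h eps d0 a"
proof -
  have a': "(a has_real_derivative b t) (at t within {0..})"
    and b': "(b has_real_derivative accel (a t) (b t)) (at t within {0..})"
    and adm: "eps * a t \<in> admissible" and dom: "l * (eps * b t) < 2 * r0" if "t \<ge> 0" for t
    using assms that by (simp_all add: solves_system_def)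
  define D where "D n = (deriv_on {0..} ^^ n) a" for n
  have "Ck_on (n + Suc 0) {0..} a" for n using Ck_on_solution[OF a' b' adm dom] by blast
  then have "Ck_on (Suc 0) {0..} (D n)" for n unfolding D_def by (rule Ck_on_deriv_on_funpow)
  then have tower: "deriv_tower_nonneg D"
    by (simp add: deriv_tower_nonneg_def D_def)
  have D1: "D 1 t = b t" if "t \<ge> 0" for t
    using deriv_on_eq[OF dense_in_itself_Ici _ a'[OF that]] that by (simp add: D_def)
  have D2: "D 2 t = accel (a t) (b t)" if "t \<ge> 0" for t
  proof -
    have "(D 1 has_real_derivative accel (a t) (b t)) (at t within {0..})"
      by (rule has_field_derivative_transform_within[OF b'[OF that] zero_less_one])
         (use that D1 in auto)
    then show ?thesis
      using deriv_on_eq[OF dense_in_itself_Ici] that by (simp add: D_def numeral_2_eq_2)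
  qed
  show ?thesis
    unfolding is_global_solution_def
  proof (intro exI[of _ D] conjI allI impI ballI)
    show "D 0 = a" by (simp add: D_def)
    show "D 0 0 = d0" "D 1 0 = 0" using assms D1[of 0] by (simp_all add: D_def solves_system_def)
    fix t :: real assume t: "t \<ge> 0"
    show "h x + eps * D 0 t > 0" if "x \<in> {-l..l}" for x
      using admissible_pos[OF adm[OF t] that] by (simp add: D_def)
    show "l * (eps * D 1 t) < 2 * r0" using dom[OF t] D1[OF t] by simp
    show "(T (eps * D 0 t))\<^sup>2 * D 2 t + l * D 1 t + D 0 t
        + eps * (T (eps * D 0 t) * T' (eps * D 0 t) + gamma l (eps * D 1 t)) * (D 1 t)\<^sup>2 = 0"
      using accel_iff[OF adm[OF t]] D1[OF t] D2[OF t] by (simp add: D_def)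
  qed (fact tower)
qed

lemma global_solution_solves_system:
  assumes "is_global_solution l tb h eps d0 \<delta>"
  obtains b where "solves_system \<delta> b"
proof -
  obtain D where D: "D 0 = \<delta>" "deriv_tower_nonneg D" "D 0 0 = d0" "D 1 0 = 0"
    and H: "\<And>t. t \<ge> 0 \<Longrightarrow> (\<forall>x\<in>{-l..l}. h x + eps * D 0 t > 0) \<and> l * (eps * D 1 t) < 2 * r0 \<and>
          (T (eps * D 0 t))\<^sup>2 * D 2 t + l * D 1 t + D 0 t
          + eps * (T (eps * D 0 t) * T' (eps * D 0 t) + gamma l (eps * D 1 t)) * (D 1 t)\<^sup>2 = 0"
    using assms unfolding is_global_solution_def by blast
  have "solves_system \<delta> (D 1)"
    unfolding solves_system_def
  proof (intro conjI allI impI)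
    show "\<delta> 0 = d0" "D 1 0 = 0" using D by auto
    fix t :: real assume t: "t \<ge> 0"
    show "(\<delta> has_real_derivative D 1 t) (at t within {0..})"
      using D(1,2) t unfolding deriv_tower_nonneg_def by (metis One_nat_def)
    show adm: "eps * \<delta> t \<in> admissible" using H[OF t] D(1) by (simp add: admissible_iff)
    show "l * (eps * D 1 t) < 2 * r0" using H[OF t] by simp
    have "D 2 t = accel (\<delta> t) (D 1 t)" using H[OF t] accel_iff[OF adm] D(1) by simp
    then show "(D 1 has_real_derivative accel (\<delta> t) (D 1 t)) (at t within {0..})"
      using D(2) t unfolding deriv_tower_nonneg_def by (metis Suc_1)
  qed
  then show ?thesis by (rule that)
qed

lemma solves_system_bound:
  assumes "solves_system a b" "t \<ge> 0"
  shows "\<bar>a t\<bar> \<le> \<bar>d0\<bar> \<and> \<bar>b t\<bar> \<le> B0"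
proof -
  have a': "(a has_real_derivative b s) (at s within {0..})"
    and b': "(b has_real_derivative accel (a s) (b s)) (at s within {0..})"
    and adm: "eps * a s \<in> admissible" and dom: "l * (eps * b s) < 2 * r0" if "s \<ge> 0" for s
    using assms(1) that by (simp_all add: solves_system_def)
  have "continuous_on {0..} a" "continuous_on {0..} b"
    by (rule DERIV_continuous_on, rule a', simp) (rule DERIV_continuous_on, rule b', simp)
  then have cont: "continuous_on {0..t} a" "continuous_on {0..t} b"
    by (auto intro: continuous_on_subset)
  have "continuous_on {0..t} (\<lambda>s. eps * a s)" by (intro continuous_intros cont)
  then have "continuous_on {0..t} (\<lambda>s. T (eps * a s))"
    by (rule continuous_on_compose2[OF smooth_on_imp_continuous_on[OF smooth_on_tau0]])
       (use adm in auto)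
  then show ?thesis
  proof (rule energy_bound[where \<kappa>="\<lambda>x. x", OF assms(2) cont])
    show "a 0 = d0" "b 0 = 0" using assms(1) by (simp_all add: solves_system_def)
    show "(a has_real_derivative b s) (at s) \<and> (b has_real_derivative accel (a s) (b s)) (at s) \<and>
        ((\<lambda>x. x) has_real_derivative 1) (at (a s)) \<and> a s = a s \<and>
        eps * a s \<in> admissible \<and> l * (eps * b s) < 2 * r0" if "0 < s" "s < t" for s
      using has_real_derivative_within_Ici_at[OF that(1)] a' b' adm dom that by auto
  qed simp
qed

lemma solves_system_truncated:
  assumes "solves_system a b"
  shows "ivp_solution truncated_field (d0, 0) (\<lambda>t. (a t, b t))"
  unfolding ivp_solution_def
proof (intro conjI allI impI)
  show "(a 0, b 0) = (d0, 0)" using assms by (simp add: solves_system_def)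
  fix t :: real assume t: "t \<ge> 0"
  have "\<bar>a t\<bar> < A" "\<bar>b t\<bar> < B"
    using solves_system_bound[OF assms t] A_bounds(1) B_bounds(1) by auto
  then have "truncated_field (a t, b t) = (b t, accel (a t) (b t))"
    by (simp add: truncated_field_def clamp_eq_self less_imp_le)
  moreover have "((\<lambda>t. (a t, b t)) has_vector_derivative (b t, accel (a t) (b t))) (at t within {0..})"
    using assms t
    by (intro has_vector_derivative_Pair)
       (simp_all add: solves_system_def has_real_derivative_iff_has_vector_derivative)
  ultimately show "((\<lambda>t. (a t, b t)) has_vector_derivative truncated_field (a t, b t)) (at t within {0..})"
    by simp
qed

lemma truncated_solves_system:
  assumes u: "ivp_solution truncated_field (d0, 0) u"
  shows "solves_system (\<lambda>t. fst (u t)) (\<lambda>t. snd (u t))"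
  unfolding solves_system_def
proof (intro conjI allI impI)
  show "fst (u 0) = d0" "snd (u 0) = 0" using u by (simp_all add: ivp_solution_def)
  fix t :: real assume t: "t \<ge> 0"
  have in_box: "\<bar>fst (u t)\<bar> \<le> A" "\<bar>snd (u t)\<bar> \<le> B"
    using truncated_solution_in_box[OF u t] by auto
  show "((\<lambda>t. fst (u t)) has_real_derivative snd (u t)) (at t within {0..})"
    and "((\<lambda>t. snd (u t)) has_real_derivative accel (fst (u t)) (snd (u t))) (at t within {0..})"
    using truncated_solution_has_derivative[OF u t] in_box by (simp_all add: clamp_eq_self)
  show "eps * fst (u t) \<in> admissible" "l * (eps * snd (u t)) < 2 * r0"
    using in_box by (simp_all add: mult_eps_mem_admissible mult_eps_gamma_domain)
qed

theorem global_solution_exists_unique: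
  "\<exists>\<delta>. is_global_solution l tb h eps d0 \<delta> \<and>
     (\<forall>\<delta>'. is_global_solution l tb h eps d0 \<delta>' \<longrightarrow> (\<forall>t\<ge>0. \<delta>' t = \<delta> t))"
proof -
  obtain L where "L-lipschitz_on UNIV truncated_field" using truncated_field_lipschitz by blast
  then obtain u where u: "ivp_solution truncated_field (d0, 0) u"
    and unique: "\<And>v. ivp_solution truncated_field (d0, 0) v \<Longrightarrow> \<forall>t\<ge>0. v t = u t"
    using ivp_solution_exists_unique[OF _ truncated_field_bounded] by blast
  show ?thesis
  proof (intro exI[of _ "\<lambda>t. fst (u t)"] conjI allI impI)
    show "is_global_solution l tb h eps d0 (\<lambda>t. fst (u t))"
      by (rule solves_system_is_global_solution[OF truncated_solves_system[OF u]])
    fix \<delta>' t assume "is_global_solution l tb h eps d0 \<delta>'" "t \<ge> (0::real)"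
    then obtain b where "solves_system \<delta>' b" using global_solution_solves_system by blast
    with unique[OF solves_system_truncated] \<open>t \<ge> 0\<close> show "\<delta>' t = fst (u t)" by (metis fst_conv)
  qed
qed

end

theorem proposition4p9:
  fixes l tb eps d0 :: real and h :: "real \<Rightarrow> real"
  assumes "l > 0" and "tb > 0"
    and "continuous_on {-l..l} h"
    and "\<forall>x\<in>{-l..l}. h x > 0"
    and "\<forall>x\<in>{-l..l}. h (-x) = h x"
    and "eps \<ge> 0"
    and "Inf (h ` {-l..l}) - eps * \<bar>d0\<bar> > 0"
    and "eps * \<bar>d0\<bar> < tau0 l tb h (eps * \<bar>d0\<bar>) * (2 * r0 / l)"
  shows "\<exists>\<delta>. is_global_solution l tb h eps d0 \<delta> \<and>
           (\<forall>\<delta>'. is_global_solution l tb h eps d0 \<delta>' \<longrightarrow> (\<forall>t\<ge>0. \<delta>' t = \<delta> t))"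
proof -
  interpret positive_profile l tb h
    using assms by unfold_locales auto
  interpret oscillator l tb h eps d0
    using assms by unfold_locales (auto simp: h_min_def)
  show ?thesis by (rule global_solution_exists_unique)
qed

end
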